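(* For every $\epsilon>0$ there exist $m_0(\epsilon)$ and $p_0(\epsilon)$ such that for every prime $p>p_0(\epsilon)$ and every $f:\mathbb{Z}_p\to[0,1]$ there exist an integer $1\le m<m_0(\epsilon)$, integers $c_1,\dots,c_m$ that are pairwise distinct modulo $p$ and satisfy $|c_i|<p^{1-1/m}$, and a function $g:\mathbb{R}\to\mathbb{R}$ of the form $$g(\alpha)=p^{-1}\sum_{i=1}^m e^{-2\pi i c_i\alpha/p}\,\gamma_i\qquad(\alpha\in\mathbb{R})$$ for some complex numbers $\gamma_i$, such that (writing $\tilde g$ for the restriction of $g$ to $\{0,\dots,p-1\}$, viewed as a function on $\mathbb{Z}_p$; note $g$ is $p$-periodic and $\hat{\tilde g}(c_i)=\gamma_i$): (i) $\mathbb{E}(\tilde g)=\mathbb{E}(f)$; (ii) $g(\alpha)\in[-2\epsilon,1+2\epsilon]$ for all $\alpha\in\mathbb{R}$; (iii) $|\Lambda_3(\tilde g)-\Lambda_3(f)|<25\epsilon$.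
   Context: For $f:\mathbb{Z}_p\to\mathbb{C}$: $\hat f(a)=\sum_{n\in\mathbb{Z}_p} f(n)e^{2\pi i a n/p}$, $\mathbb{E}(f)=\frac1p\sum_{n\in\mathbb{Z}_p}f(n)$, and $\Lambda_3(f)=\frac{1}{p^2}\sum_{n,d\in\mathbb{Z}_p} f(n)f(n+d)f(n+2d)$. *)

theory Defs
  imports Complex_Main "HOL-Computational_Algebra.Primes"
begin

text \<open>Functions on Z_p are represented as functions on nat, only their values on
  {0..<p} matter; residues are taken with mod p.\<close>

definition zp_mean :: "nat \<Rightarrow> (nat \<Rightarrow> real) \<Rightarrow> real" where
  "zp_mean p f = (1 / real p) * (\<Sum>n<p. f n)"

definition zp_Lambda3 :: "nat \<Rightarrow> (nat \<Rightarrow> real) \<Rightarrow> real" where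
  "zp_Lambda3 p f = (1 / (real p)^2) *
     (\<Sum>n<p. \<Sum>d<p. f n * f ((n + d) mod p) * f ((n + 2 * d) mod p))"

end

theory Submission
  imports Defs "HOL-Number_Theory.Cong" "HOL-Library.FuncSet" "HOL-Library.Real_Mod"
begin

(*
  Mean and Lambda3 are invariant under dilations x |-> t x of Z_p, so it suffices to
  approximate a dilate h of f.  By Parseval f has fewer than K ~ 2 / eps^2 Fourier
  coefficients of size at least eps, counting also the frequencies a with a large coefficient
  at -2a.  Dirichlet's simultaneous approximation theorem yields a dilation t moving all of
  them to integers s with |s| < p / M, where M ~ p^(1/K).  Convolving h with the nonnegative
  kernel prod_{s in T} F_N(s x), a product of Fejer kernels, gives a [0,1]-valued g with the
  same mean whose Fourier coefficients are those of h times multipliers in [0,1] that exceed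
  1 - 4/N on T.  Since Lambda3 h = sum_a h^(a)^2 h^(-2a), the large coefficients change
  little and the small ones are controlled by Parseval, so Lambda3 moves by at most
  2 eps + 12/N.  Finally g is a trigonometric polynomial with at most N^(2K) frequencies, all
  of size at most N sum_{s in T} |s| < p^(1 - 1/m).
*)

lemma sum_swap3:
  "(\<Sum>a\<in>A. \<Sum>x\<in>B. \<Sum>y\<in>C. f a x y) = (\<Sum>x\<in>B. \<Sum>y\<in>C. \<Sum>a\<in>A. f a x y)"
  by (subst sum.swap) (simp only: sum.swap[of _ A C])

lemma sum_comp_eq_sum_card_fibres:
  fixes G :: "'b \<Rightarrow> 'c::comm_semiring_1"
  assumes "finite I" "finite C" "f ` I \<subseteq> C"
  shows "(\<Sum>i\<in>I. G (f i)) = (\<Sum>x\<in>C. of_nat (card {i \<in> I. f i = x}) * G x)"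
proof -
  have "(\<Sum>i\<in>I. G (f i)) = (\<Sum>x\<in>C. \<Sum>i\<in>{i \<in> I. f i = x}. G (f i))"
    using assms by (intro sum.group[symmetric]) auto
  also have "\<dots> = (\<Sum>x\<in>C. of_nat (card {i \<in> I. f i = x}) * G x)"
    by (intro sum.cong refl) simp
  finally show ?thesis .
qed

lemma bij_betw_mod_lessThan:
  fixes f :: "nat \<Rightarrow> nat"
  assumes "p > 0" and "\<And>x y. x < p \<Longrightarrow> y < p \<Longrightarrow> [f x = f y] (mod p) \<Longrightarrow> x = y"
  shows "bij_betw (\<lambda>x. f x mod p) {..<p} {..<p}"
proof -
  have "inj_on (\<lambda>x. f x mod p) {..<p}"
    using assms(2) by (auto intro: inj_onI simp: cong_def)
  moreover have "(\<lambda>x. f x mod p) ` {..<p} \<subseteq> {..<p}"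
    using assms(1) by auto
  ultimately show ?thesis
    by (simp add: bij_betw_def endo_inj_surj)
qed

lemma int_dvd_diff_iff_eq:
  assumes "x < p" "y < p"
  shows "int p dvd (int x - int y) \<longleftrightarrow> x = y"
  using assms by (auto simp: cong_iff_dvd_diff[symmetric] cong_int_iff dest: cong_less_modulus_unique_nat)

lemma sum_lessThan_dvd_delta:
  assumes "p > 0"
  shows "(\<Sum>y<p. if int p dvd (int y - k) then F y else 0) = F (nat (k mod int p))"
proof -
  have "int p dvd (int y - k) \<longleftrightarrow> y = nat (k mod int p)" if "y < p" for y
  proof -
    have "int p dvd (int y - k) \<longleftrightarrow> int y = k mod int p"
      using that by (simp add: mod_eq_dvd_iff[symmetric] cong_def)
    then show ?thesis
      using assms by auto
  qed
  moreover have "nat (k mod int p) < p"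
    using assms by (simp add: nat_less_iff)
  ultimately show ?thesis
    by (simp add: sum.delta cong: if_cong)
qed

section \<open>Additive characters modulo p\<close>

definition zp_exp :: "nat \<Rightarrow> real \<Rightarrow> complex" where
  "zp_exp p \<theta> = cis (2 * pi * \<theta> / real p)"

lemma zp_exp_add: "zp_exp p (a + b) = zp_exp p a * zp_exp p b"
  by (simp add: zp_exp_def cis_mult add_divide_distrib algebra_simps)

lemma zp_exp_zero [simp]: "zp_exp p 0 = 1"
  by (simp add: zp_exp_def)

lemma zp_exp_minus: "zp_exp p (- a) = cnj (zp_exp p a)"
  by (simp add: zp_exp_def cis_cnj)

lemma norm_zp_exp [simp]: "norm (zp_exp p a) = 1"
  by (simp add: zp_exp_def)

lemma zp_exp_power: "zp_exp p a ^ n = zp_exp p (real n * a)"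
  by (simp add: zp_exp_def DeMoivre algebra_simps)

lemma zp_exp_sum: "zp_exp p (\<Sum>i\<in>I. a i) = (\<Prod>i\<in>I. zp_exp p (a i))"
  by (induction I rule: infinite_finite_induct) (simp_all add: zp_exp_add)

lemma zp_exp_eq_exp:
  "zp_exp p (of_int (- c) * \<alpha>) = exp (- 2 * of_real pi * \<i> * of_int c * of_real \<alpha> / of_nat p)"
  by (simp add: zp_exp_def cis_conv_exp field_simps)

lemma zp_exp_eq_1_iff:
  assumes "p > 0"
  shows "zp_exp p (of_int k) = 1 \<longleftrightarrow> int p dvd k"
proof -
  have "zp_exp p (of_int k) = 1 \<longleftrightarrow> (\<exists>n. real_of_int k = of_int n * real p)"
    using assms by (auto simp: zp_exp_def cis_eq_1_iff field_simps)
  also have "\<dots> \<longleftrightarrow> int p dvd k"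
    by (metis dvd_def mult.commute of_int_eq_iff of_int_mult of_int_of_nat_eq)
  finally show ?thesis .
qed

lemma zp_exp_cong:
  assumes "p > 0" "[a = b] (mod int p)"
  shows "zp_exp p (of_int a) = zp_exp p (of_int b)"
proof -
  have "zp_exp p (of_int (a - b)) = 1"
    using assms by (simp only: zp_exp_eq_1_iff cong_iff_dvd_diff cong_sym_eq)
  then show ?thesis
    by (metis add_diff_cancel_left' diff_add_cancel mult_1 of_int_add zp_exp_add)
qed

lemma sum_zp_exp:
  assumes "p > 0"
  shows "(\<Sum>x<p. zp_exp p (of_int (\<nu> * int x))) = (if int p dvd \<nu> then of_nat p else 0)"
proof -
  define z where "z = zp_exp p (of_int \<nu>)"
  have powers: "zp_exp p (of_int (\<nu> * int x)) = z ^ x" for x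
    by (simp add: z_def zp_exp_power mult.commute)
  have "z ^ p = 1"
    using zp_exp_eq_1_iff[OF assms, of "\<nu> * int p"] by (simp add: powers[symmetric])
  moreover have "z = 1 \<longleftrightarrow> int p dvd \<nu>"
    using zp_exp_eq_1_iff[OF assms] by (simp add: z_def)
  ultimately show ?thesis
    unfolding powers by (auto simp: geometric_sum)
qed

lemma sum_zp_exp_progression:
  assumes "p > 0"
  shows "(\<Sum>n<p. zp_exp p (of_int \<nu> * (\<beta> + of_int k * real n)) * zp_exp p (of_int (a * int n))) =
    (if int p dvd k * \<nu> + a then of_nat p * zp_exp p (of_int \<nu> * \<beta>) else 0)"
proof -
  have split: "zp_exp p (of_int \<nu> * (\<beta> + of_int k * real n)) * zp_exp p (of_int (a * int n)) =
      zp_exp p (of_int \<nu> * \<beta>) * zp_exp p (of_int ((k * \<nu> + a) * int n))" for n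
    by (simp add: zp_exp_add[symmetric] algebra_simps)
  show ?thesis
    unfolding split sum_distrib_left[symmetric] sum_zp_exp[OF assms] by simp
qed

lemma norm_one_minus_squared:
  assumes "norm z = 1"
  shows "complex_of_real ((norm (1 - z))\<^sup>2) = 2 - z - cnj z"
proof -
  have "complex_of_real ((norm (1 - z))\<^sup>2) = (1 - z) * cnj (1 - z)"
    by (rule complex_norm_square)
  also have "\<dots> = 1 - z - cnj z + z * cnj z"
    by (simp add: algebra_simps)
  also have "z * cnj z = 1"
    using complex_norm_square[of z] assms by simp
  finally show ?thesis
    by simp
qed

section \<open>Fourier coefficients\<close>

(* Normalised by 1/p: this is the paper's f^ divided by p. *)
definition zp_fourier :: "nat \<Rightarrow> (nat \<Rightarrow> real) \<Rightarrow> int \<Rightarrow> complex" where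
  "zp_fourier p \<phi> a = (\<Sum>x<p. of_real (\<phi> x) * zp_exp p (of_int (a * int x))) / of_nat p"

lemma zp_fourier_cong:
  assumes "p > 0" "[a = b] (mod int p)"
  shows "zp_fourier p \<phi> a = zp_fourier p \<phi> b"
proof -
  have "zp_exp p (of_int (a * int x)) = zp_exp p (of_int (b * int x))" for x
    using assms by (intro zp_exp_cong) (simp_all add: cong_mult)
  then show ?thesis
    by (simp add: zp_fourier_def)
qed

lemma sum_norm_zp_fourier_squared:
  assumes "p > 0"
  shows "(\<Sum>a<p. (norm (zp_fourier p \<phi> (int a)))\<^sup>2) = (\<Sum>x<p. (\<phi> x)\<^sup>2) / real p"
proof -
  define t where "t x y a = of_real (\<phi> x * \<phi> y) * zp_exp p (of_int ((int x - int y) * int a))"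
    for x y a
  have expand: "zp_fourier p \<phi> (int a) * cnj (zp_fourier p \<phi> (int a)) =
      (\<Sum>x<p. \<Sum>y<p. t x y a) / of_nat p ^ 2" for a
  proof -
    have "zp_exp p (of_int (int a * int x)) * cnj (zp_exp p (of_int (int a * int y))) =
        zp_exp p (of_int ((int x - int y) * int a))" for x y
      by (simp add: zp_exp_minus[symmetric] zp_exp_add[symmetric] algebra_simps)
    then show ?thesis
      by (simp add: t_def zp_fourier_def sum_product power2_eq_square mult_ac)
  qed
  have "complex_of_real (\<Sum>a<p. (norm (zp_fourier p \<phi> (int a)))\<^sup>2) =
      (\<Sum>a<p. zp_fourier p \<phi> (int a) * cnj (zp_fourier p \<phi> (int a)))"
    by (simp only: of_real_sum complex_norm_square)
  also have "\<dots> = (\<Sum>x<p. \<Sum>y<p. \<Sum>a<p. t x y a) / of_nat p ^ 2"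
    by (simp only: expand sum_divide_distrib[symmetric] sum_swap3[of "\<lambda>a x y. t x y a"])
  also have "\<dots> = (\<Sum>x<p. of_nat p * of_real ((\<phi> x)\<^sup>2)) / of_nat p ^ 2"
  proof -
    have "(\<Sum>a<p. t x y a) = (if y = x then of_nat p * of_real ((\<phi> x)\<^sup>2) else 0)"
      if "x < p" "y < p" for x y
    proof -
      have "(\<Sum>a<p. t x y a) = of_real (\<phi> x * \<phi> y) *
          (if int p dvd (int x - int y) then of_nat p else 0)"
        by (simp only: t_def sum_distrib_left[symmetric] sum_zp_exp[OF assms])
      then show ?thesis
        using that int_dvd_diff_iff_eq[of x p y] by (simp add: power2_eq_square)
    qed
    then show ?thesis
      by (simp add: sum.delta)
  qed
  also have "\<dots> = complex_of_real ((\<Sum>x<p. (\<phi> x)\<^sup>2) / real p)"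
    using assms by (simp add: sum_distrib_left[symmetric] power2_eq_square)
  finally show ?thesis
    by (simp only: of_real_eq_iff)
qed

lemma norm_zp_fourier_le_1:
  assumes "p > 0" "\<forall>x<p. \<bar>\<phi> x\<bar> \<le> 1"
  shows "norm (zp_fourier p \<phi> a) \<le> 1"
proof -
  have "norm (\<Sum>x<p. of_real (\<phi> x) * zp_exp p (of_int (a * int x))) \<le> (\<Sum>x<p. 1)"
    by (rule order_trans[OF norm_sum sum_mono]) (use assms(2) in \<open>simp add: norm_mult\<close>)
  then show ?thesis
    using assms(1) by (simp add: zp_fourier_def norm_divide divide_le_eq)
qed

lemma sum_norm_zp_fourier_squared_le_1:
  assumes "p > 0" "\<forall>x<p. \<bar>\<phi> x\<bar> \<le> 1"
  shows "(\<Sum>a<p. (norm (zp_fourier p \<phi> (int a)))\<^sup>2) \<le> 1"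
proof -
  have "(\<Sum>x<p. (\<phi> x)\<^sup>2) \<le> (\<Sum>x<p. 1)"
    using assms(2) by (intro sum_mono) (simp add: abs_square_le_1)
  then show ?thesis
    using assms(1) by (simp add: sum_norm_zp_fourier_squared)
qed

definition large_spectrum :: "nat \<Rightarrow> (nat \<Rightarrow> real) \<Rightarrow> real \<Rightarrow> nat set" where
  "large_spectrum p \<phi> \<delta> = {a. a < p \<and> \<delta> \<le> norm (zp_fourier p \<phi> (int a))}"

lemma card_large_spectrum:
  assumes "p > 0" "\<forall>x<p. \<bar>\<phi> x\<bar> \<le> 1" "\<delta> > 0"
  shows "real (card (large_spectrum p \<phi> \<delta>)) * \<delta>\<^sup>2 \<le> 1"
proof -
  let ?S = "large_spectrum p \<phi> \<delta>"
  have "real (card ?S) * \<delta>\<^sup>2 = (\<Sum>a\<in>?S. \<delta>\<^sup>2)"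
    by simp
  also have "\<dots> \<le> (\<Sum>a\<in>?S. (norm (zp_fourier p \<phi> (int a)))\<^sup>2)"
    using assms(3) by (intro sum_mono power_mono) (auto simp: large_spectrum_def)
  also have "\<dots> \<le> (\<Sum>a<p. (norm (zp_fourier p \<phi> (int a)))\<^sup>2)"
    by (intro sum_mono2) (auto simp: large_spectrum_def)
  finally show ?thesis
    using sum_norm_zp_fourier_squared_le_1[OF assms(1,2)] by linarith
qed

lemma card_large_zp_fourier_mult_le:
  assumes "p > 0" "coprime k (int p)"
  shows "card {b. b < p \<and> \<delta> \<le> norm (zp_fourier p \<phi> (k * int b))} \<le> card (large_spectrum p \<phi> \<delta>)"
proof (rule card_inj_on_le)
  let ?r = "\<lambda>b. nat ((k * int b) mod int p)"
  have r: "int (?r b) = (k * int b) mod int p" for b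
    using assms(1) by simp
  have "zp_fourier p \<phi> ((k * int b) mod int p) = zp_fourier p \<phi> (k * int b)" for b
    using assms(1) by (intro zp_fourier_cong) (simp_all add: cong_def)
  then show "?r ` {b. b < p \<and> \<delta> \<le> norm (zp_fourier p \<phi> (k * int b))} \<subseteq> large_spectrum p \<phi> \<delta>"
    using assms(1) by (auto simp: large_spectrum_def r nat_less_iff)
  show "inj_on ?r {b. b < p \<and> \<delta> \<le> norm (zp_fourier p \<phi> (k * int b))}"
  proof (rule inj_onI)
    fix b b' assume "b \<in> {b. b < p \<and> \<delta> \<le> norm (zp_fourier p \<phi> (k * int b))}"
      "b' \<in> {b. b < p \<and> \<delta> \<le> norm (zp_fourier p \<phi> (k * int b))}" "?r b = ?r b'"
    then have "[k * int b = k * int b'] (mod int p)" "b < p" "b' < p"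
      by (simp_all add: cong_def) (metis r)
    then show "b = b'"
      using assms(2) by (auto simp: cong_mult_lcancel cong_int_iff dest: cong_less_modulus_unique_nat)
  qed
qed (simp add: large_spectrum_def)

lemma card_large_spectrum_doubled:
  assumes "prime p" "p > 2" "\<forall>x<p. \<bar>\<phi> x\<bar> \<le> 1" "\<delta> > 0" "2 / \<delta>\<^sup>2 < real K"
  shows "card (large_spectrum p \<phi> \<delta> \<union> {b. b < p \<and> \<delta> \<le> norm (zp_fourier p \<phi> (- 2 * int b))}) \<le> K"
proof -
  let ?S = "large_spectrum p \<phi> \<delta>" and ?S2 = "{b. b < p \<and> \<delta> \<le> norm (zp_fourier p \<phi> (- 2 * int b))}"
  have p: "p > 0"
    using assms(2) by simp
  have "coprime (- 2) (int p)"
    using assms(1,2)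
    by (metis coprime_int_iff coprime_minus_left_iff int_ops(3) less_not_refl primes_coprime_nat two_is_prime_nat)
  then have "card ?S2 \<le> card ?S"
    by (rule card_large_zp_fourier_mult_le[OF p])
  then have "real (card (?S \<union> ?S2)) * \<delta>\<^sup>2 \<le> (2 * real (card ?S)) * \<delta>\<^sup>2"
    using card_Un_le[of ?S ?S2] by (intro mult_right_mono) simp_all
  also have "\<dots> \<le> 2"
    using card_large_spectrum[OF p assms(3,4)] by simp
  also have "\<dots> < real K * \<delta>\<^sup>2"
    using assms(4,5) by (simp add: field_simps)
  finally show ?thesis
    using assms(4) by (simp add: mult_less_cancel_right_pos)
qed

lemma nat_mod_double_shift: "nat ((2 * int ((x + d) mod p) - int x) mod int p) = (x + 2 * d) mod p"
proof -
  have "[2 * int ((x + d) mod p) - int x = 2 * (int x + int d) - int x] (mod int p)"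
    by (intro cong_diff cong_mult cong_refl) (simp add: cong_def of_nat_mod)
  then have "(2 * int ((x + d) mod p) - int x) mod int p = int ((x + 2 * d) mod p)"
    by (simp add: cong_def of_nat_mod algebra_simps)
  then show ?thesis
    by simp
qed

lemma sum_progressions_eq_sum_3AP:
  fixes \<phi> :: "nat \<Rightarrow> real"
  assumes "p > 0"
  shows "(\<Sum>d<p. \<phi> x * \<phi> ((x + d) mod p) * \<phi> ((x + 2 * d) mod p)) =
    (\<Sum>y<p. \<Sum>z<p. if int p dvd (int x + int y - 2 * int z) then \<phi> x * \<phi> y * \<phi> z else 0)"
proof -
  have shift: "bij_betw (\<lambda>d. (x + d) mod p) {..<p} {..<p}"
    using assms by (intro bij_betw_mod_lessThan) (auto simp: cong_add_lcancel_nat dest: cong_less_modulus_unique_nat)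
  have "(\<Sum>y<p. \<Sum>z<p. if int p dvd (int x + int y - 2 * int z) then \<phi> x * \<phi> y * \<phi> z else 0) =
      (\<Sum>z<p. \<Sum>y<p. if int p dvd (int y - (2 * int z - int x)) then \<phi> x * \<phi> y * \<phi> z else 0)"
    by (subst sum.swap) (simp add: algebra_simps)
  also have "\<dots> = (\<Sum>z<p. \<phi> x * \<phi> (nat ((2 * int z - int x) mod int p)) * \<phi> z)"
    by (simp only: sum_lessThan_dvd_delta[OF assms])
  also have "\<dots> = (\<Sum>d<p. \<phi> x * \<phi> (nat ((2 * int ((x + d) mod p) - int x) mod int p)) *
      \<phi> ((x + d) mod p))"
    by (rule sum.reindex_bij_betw[OF shift, symmetric])
  also have "\<dots> = (\<Sum>d<p. \<phi> x * \<phi> ((x + d) mod p) * \<phi> ((x + 2 * d) mod p))"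
    by (simp add: nat_mod_double_shift mult_ac)
  finally show ?thesis
    by (rule sym)
qed

lemma zp_Lambda3_eq_sum_3AP:
  assumes "p > 0"
  shows "zp_Lambda3 p \<phi> = (\<Sum>x<p. \<Sum>y<p. \<Sum>z<p.
    if int p dvd (int x + int y - 2 * int z) then \<phi> x * \<phi> y * \<phi> z else 0) / (real p)\<^sup>2"
  using sum_progressions_eq_sum_3AP[OF assms, of \<phi>]
  by (simp add: zp_Lambda3_def divide_inverse mult.commute)

lemma zp_Lambda3_eq_sum_zp_fourier:
  assumes "p > 0"
  shows "complex_of_real (zp_Lambda3 p \<phi>) =
    (\<Sum>a<p. zp_fourier p \<phi> (int a) ^ 2 * zp_fourier p \<phi> (- 2 * int a))"
proof -
  define t where "t x y z a = of_real (\<phi> x * \<phi> y * \<phi> z) *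
      zp_exp p (of_int ((int x + int y - 2 * int z) * int a))" for x y z a
  have expand: "zp_fourier p \<phi> (int a) ^ 2 * zp_fourier p \<phi> (- 2 * int a) =
      (\<Sum>x<p. \<Sum>y<p. \<Sum>z<p. t x y z a) / of_nat p ^ 3" for a
  proof -
    have "zp_exp p (of_int (int a * int x)) * zp_exp p (of_int (int a * int y)) *
        zp_exp p (of_int (- 2 * int a * int z)) = zp_exp p (of_int ((int x + int y - 2 * int z) * int a))"
      for x y z
      by (simp add: zp_exp_add[symmetric] algebra_simps)
    then show ?thesis
      by (simp add: t_def zp_fourier_def sum_product sum_distrib_left sum_distrib_right
          sum_divide_distrib[symmetric] power2_eq_square power3_eq_cube mult_ac)
  qed
  have orth: "(\<Sum>a<p. t x y z a) = of_nat p *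
      of_real (if int p dvd (int x + int y - 2 * int z) then \<phi> x * \<phi> y * \<phi> z else 0)" for x y z
    by (simp only: t_def sum_distrib_left[symmetric] sum_zp_exp[OF assms]) simp
  have swap: "(\<Sum>a<p. \<Sum>z<p. t x y z a) = (\<Sum>z<p. \<Sum>a<p. t x y z a)" for x y
    by (rule sum.swap)
  have "(\<Sum>a<p. zp_fourier p \<phi> (int a) ^ 2 * zp_fourier p \<phi> (- 2 * int a)) =
      (\<Sum>x<p. \<Sum>y<p. \<Sum>z<p. \<Sum>a<p. t x y z a) / of_nat p ^ 3"
    by (simp only: expand sum_divide_distrib[symmetric] sum_swap3[of "\<lambda>a x y. \<Sum>z<p. t x y z a"] swap)
  also have "\<dots> = complex_of_real (zp_Lambda3 p \<phi>)"
    using assms by (simp add: orth zp_Lambda3_eq_sum_3AP sum_distrib_left[symmetric] power2_eq_square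
        power3_eq_cube)
  finally show ?thesis ..
qed

lemma abs_one_minus_square_mult_le:
  fixes c x y :: real
  assumes "0 \<le> c" "c \<le> x" "x \<le> 1" "c \<le> y" "y \<le> 1"
  shows "\<bar>1 - x\<^sup>2 * y\<bar> \<le> 3 * (1 - c)"
proof -
  have "c\<^sup>2 * c \<le> x\<^sup>2 * y"
    using assms by (intro mult_mono power_mono) auto
  moreover have "x\<^sup>2 * y \<le> 1"
    using assms by (intro mult_le_one) (auto simp: power_le_one)
  moreover have "1 - c\<^sup>2 * c = (1 - c) * (1 + c + c\<^sup>2)"
    by (simp add: algebra_simps power2_eq_square)
  moreover have "(1 - c) * (1 + c + c\<^sup>2) \<le> (1 - c) * 3"
  proof -
    have "c \<le> 1"
      using assms by linarith
    moreover from this have "c\<^sup>2 \<le> 1"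
      using assms(1) by (simp add: power_le_one)
    ultimately show ?thesis
      by (intro mult_left_mono) simp_all
  qed
  ultimately show ?thesis
    by linarith
qed

lemma mult_abs_one_minus_square_mult_le:
  fixes r x y \<delta> \<eta> :: real
  assumes "0 \<le> r" "r \<le> 1" "\<bar>x\<bar> \<le> 1" "\<bar>y\<bar> \<le> 1" "0 \<le> \<delta>" "0 \<le> \<eta>" "\<eta> \<le> 1"
    and "\<delta> \<le> r \<Longrightarrow> 1 - \<eta> \<le> x \<and> 1 - \<eta> \<le> y"
  shows "r * \<bar>1 - x\<^sup>2 * y\<bar> \<le> 2 * \<delta> + 3 * \<eta>"
proof (cases "\<delta> \<le> r")
  case True
  then have "\<bar>1 - x\<^sup>2 * y\<bar> \<le> 3 * (1 - (1 - \<eta>))"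
    using assms by (intro abs_one_minus_square_mult_le) (simp_all add: abs_le_iff)
  then have "r * \<bar>1 - x\<^sup>2 * y\<bar> \<le> 1 * (3 * \<eta>)"
    using assms(1,2) by (intro mult_mono) simp_all
  then show ?thesis
    using assms(5) by simp
next
  case False
  have "x\<^sup>2 \<le> 1"
    using assms(3) by (simp add: abs_square_le_1)
  then have "\<bar>x\<^sup>2 * y\<bar> \<le> 1"
    using assms(4) by (simp add: abs_mult mult_le_one)
  then have "r * \<bar>1 - x\<^sup>2 * y\<bar> \<le> \<delta> * 2"
    using False assms(1) by (intro mult_mono) simp_all
  then show ?thesis
    using assms(6) by simp
qed

lemma zp_Lambda3_multiplier_close:
  fixes g h :: "nat \<Rightarrow> real" and \<kappa> :: "int \<Rightarrow> real"
  assumes "p > 0" "\<forall>x<p. \<bar>h x\<bar> \<le> 1" "0 \<le> \<delta>" "0 \<le> \<eta>" "\<eta> \<le> 1"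
    and multiplier: "\<And>a. zp_fourier p g a = of_real (\<kappa> a) * zp_fourier p h a"
    and bounded: "\<And>a. \<bar>\<kappa> a\<bar> \<le> 1"
    and large: "\<And>a. a < p \<Longrightarrow> \<delta> \<le> norm (zp_fourier p h (- 2 * int a)) \<Longrightarrow>
      1 - \<eta> \<le> \<kappa> (int a) \<and> 1 - \<eta> \<le> \<kappa> (- 2 * int a)"
  shows "\<bar>zp_Lambda3 p g - zp_Lambda3 p h\<bar> \<le> 2 * \<delta> + 3 * \<eta>"
proof -
  define H where "H = zp_fourier p h"
  define D where "D a = 1 - (\<kappa> (int a))\<^sup>2 * \<kappa> (- 2 * int a)" for a :: nat
  have "complex_of_real (zp_Lambda3 p h - zp_Lambda3 p g) =
      (\<Sum>a<p. H (int a) ^ 2 * H (- 2 * int a)) -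
      (\<Sum>a<p. (of_real (\<kappa> (int a)) * H (int a)) ^ 2 * (of_real (\<kappa> (- 2 * int a)) * H (- 2 * int a)))"
    by (simp only: of_real_diff zp_Lambda3_eq_sum_zp_fourier[OF assms(1)] multiplier H_def)
  also have "\<dots> = (\<Sum>a<p. H (int a) ^ 2 * H (- 2 * int a) * of_real (D a))"
    by (simp only: sum_subtractf[symmetric]) (simp add: D_def algebra_simps power2_eq_square)
  finally have "\<bar>zp_Lambda3 p g - zp_Lambda3 p h\<bar> =
      norm (\<Sum>a<p. H (int a) ^ 2 * H (- 2 * int a) * of_real (D a))"
    by (metis abs_minus_commute norm_of_real)
  also have "\<dots> \<le> (\<Sum>a<p. norm (H (int a)) ^ 2 * (norm (H (- 2 * int a)) * \<bar>D a\<bar>))"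
    by (rule order_trans[OF norm_sum]) (simp add: norm_mult norm_power mult.assoc)
  also have "\<dots> \<le> (\<Sum>a<p. norm (H (int a)) ^ 2 * (2 * \<delta> + 3 * \<eta>))"
    unfolding D_def H_def
    using assms(3-5) bounded large norm_zp_fourier_le_1[OF assms(1,2)]
    by (intro sum_mono mult_left_mono mult_abs_one_minus_square_mult_le) simp_all
  also have "\<dots> \<le> 1 * (2 * \<delta> + 3 * \<eta>)"
    unfolding sum_distrib_right[symmetric] H_def using assms(3,4)
    by (intro mult_right_mono sum_norm_zp_fourier_squared_le_1[OF assms(1,2)]) simp
  finally show ?thesis
    by simp
qed

section \<open>Dilations\<close>

lemma bij_betw_dilation:
  fixes t p :: nat
  assumes "p > 0" "coprime t p"
  shows "bij_betw (\<lambda>x. (t * x) mod p) {..<p} {..<p}"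
proof (rule bij_betw_mod_lessThan[OF assms(1)])
  fix x y assume "x < p" "y < p" "[t * x = t * y] (mod p)"
  then show "x = y"
    using assms(2) by (auto simp: cong_mult_lcancel_nat dest: cong_less_modulus_unique_nat)
qed

lemma zp_mean_dilation:
  assumes "p > 0" "coprime t p"
  shows "zp_mean p (\<lambda>x. f ((t * x) mod p)) = zp_mean p f"
  unfolding zp_mean_def using sum.reindex_bij_betw[OF bij_betw_dilation[OF assms], of f] by simp

lemma zp_Lambda3_dilation:
  assumes "p > 0" "coprime t p"
  shows "zp_Lambda3 p (\<lambda>x. f ((t * x) mod p)) = zp_Lambda3 p f"
proof -
  define F where "F n d = f n * f ((n + d) mod p) * f ((n + 2 * d) mod p)" for n d
  have "f ((t * x) mod p) * f ((t * ((x + d) mod p)) mod p) * f ((t * ((x + 2 * d) mod p)) mod p) =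
      F ((t * x) mod p) ((t * d) mod p)" for x d
  proof -
    have "[t * ((x + k * d) mod p) = (t * x) mod p + k * ((t * d) mod p)] (mod p)" for k
    proof -
      have "[t * ((x + k * d) mod p) = t * x + k * (t * d)] (mod p)"
        by (simp add: cong_def mod_mult_right_eq algebra_simps)
      moreover have "[(t * x) mod p + k * ((t * d) mod p) = t * x + k * (t * d)] (mod p)"
        by (intro cong_add cong_mult) (simp_all add: cong_def)
      ultimately show ?thesis
        by (metis cong_sym cong_trans)
    qed
    then have "(t * ((x + k * d) mod p)) mod p = ((t * x) mod p + k * ((t * d) mod p)) mod p" for k
      by (simp add: cong_def)
    from this[of 1] this[of 2] show ?thesis
      by (simp add: F_def)
  qed
  then have "zp_Lambda3 p (\<lambda>x. f ((t * x) mod p)) =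
      (\<Sum>x<p. \<Sum>d<p. F ((t * x) mod p) ((t * d) mod p)) / (real p)\<^sup>2"
    by (simp add: zp_Lambda3_def divide_inverse mult.commute)
  also have "\<dots> = (\<Sum>x<p. \<Sum>d<p. F x d) / (real p)\<^sup>2"
  proof -
    have dilate: "(\<Sum>x<p. G ((t * x) mod p)) = (\<Sum>x<p. G x)" for G :: "nat \<Rightarrow> real"
      by (rule sum.reindex_bij_betw[OF bij_betw_dilation[OF assms]])
    have "(\<Sum>x<p. \<Sum>d<p. F ((t * x) mod p) ((t * d) mod p)) = (\<Sum>x<p. \<Sum>d<p. F ((t * x) mod p) d)"
      by (intro sum.cong refl dilate)
    also have "\<dots> = (\<Sum>x<p. \<Sum>d<p. F x d)"
      by (rule dilate)
    finally show ?thesis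
      by simp
  qed
  finally show ?thesis
    by (simp add: zp_Lambda3_def F_def divide_inverse mult.commute)
qed

lemma zp_fourier_dilation:
  assumes "p > 0" "coprime t p" "[t * u = 1] (mod p)"
  shows "zp_fourier p (\<lambda>x. f ((t * x) mod p)) b = zp_fourier p f (b * int u)"
proof -
  have "zp_exp p (of_int (b * int x)) = zp_exp p (of_int (b * int u * int ((t * x) mod p)))" for x
  proof (rule zp_exp_cong[OF assms(1)])
    have "[u * ((t * x) mod p) = (t * u) * x] (mod p)"
      by (simp add: cong_def mod_mult_right_eq mult_ac)
    also have "[(t * u) * x = x] (mod p)"
      using cong_mult[OF assms(3) cong_refl, of x] by simp
    finally have "[int u * int ((t * x) mod p) = int x] (mod int p)"
      by (simp add: cong_int_iff[symmetric])
    then show "[b * int x = b * int u * int ((t * x) mod p)] (mod int p)"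
      by (simp add: cong_sym_eq cong_scalar_left mult.assoc)
  qed
  then have "zp_fourier p (\<lambda>x. f ((t * x) mod p)) b =
      (\<Sum>x<p. of_real (f ((t * x) mod p)) * zp_exp p (of_int (b * int u * int ((t * x) mod p)))) / of_nat p"
    by (simp add: zp_fourier_def)
  also have "\<dots> = zp_fourier p f (b * int u)"
    using sum.reindex_bij_betw[OF bij_betw_dilation[OF assms(1,2)],
        of "\<lambda>y. of_real (f y) * zp_exp p (of_int (b * int u * int y))"]
    by (simp add: zp_fourier_def)
  finally show ?thesis .
qed

section \<open>Simultaneous Dirichlet approximation\<close>

lemma abs_diff_mult_less_if_same_div:
  assumes "p > 0" "x * M div p = y * M div p"
  shows "\<bar>int x - int y\<bar> * int M < int p"
proof -
  define q where "q = x * M div p"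
  have "x * M = q * p + x * M mod p"
    by (simp add: q_def)
  moreover have "y * M = q * p + y * M mod p"
    by (simp add: q_def assms(2))
  ultimately have "int (x * M) = int q * int p + int (x * M mod p)" "int (y * M) = int q * int p + int (y * M mod p)"
    by (metis of_nat_add of_nat_mult)+
  moreover have "int (x * M mod p) < int p" "int (y * M mod p) < int p"
    using assms(1) by simp_all
  ultimately have "\<bar>int x * int M - int y * int M\<bar> < int p"
    by (simp only: of_nat_mult)
  moreover have "\<bar>int x - int y\<bar> * int M = \<bar>int x * int M - int y * int M\<bar>"
    by (metis abs_mult abs_of_nat left_diff_distrib)
  ultimately show ?thesis
    by simp
qed

lemma dirichlet_simultaneous_approximation:
  fixes A :: "nat set"
  assumes "finite A" "card A \<le> k" "M \<ge> 1" "M ^ k < p"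
  obtains t :: nat and s :: "nat \<Rightarrow> int" where "0 < t" "t < p"
    "\<And>c. c \<in> A \<Longrightarrow> [s c = int t * int c] (mod int p)"
    "\<And>c. c \<in> A \<Longrightarrow> \<bar>s c\<bar> * int M < int p"
proof -
  have p: "p > 0"
    using assms(4) by simp
  define B where "B t = restrict (\<lambda>c. ((t * c) mod p) * M div p) A" for t
  have "B t \<in> A \<rightarrow>\<^sub>E {..<M}" for t
    using p assms(3) by (auto simp: B_def div_less_iff_less_mult)
  moreover have "card (A \<rightarrow>\<^sub>E {..<M}) < card {..<p}"
    using assms by (simp add: card_PiE order.strict_trans1[OF power_increasing])
  ultimately have "\<not> inj_on B {..<p}"
    using assms(1) card_inj_on_le[of B "{..<p}" "A \<rightarrow>\<^sub>E {..<M}"] by (auto simp: finite_PiE)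
  then obtain t1 t2 where t12: "t1 < t2" "t2 < p" "B t1 = B t2"
    by (auto simp: inj_on_def) (metis linorder_neqE_nat)
  show ?thesis
  proof (rule that[of "t2 - t1" "\<lambda>c. int ((t2 * c) mod p) - int ((t1 * c) mod p)"])
    fix c assume "c \<in> A"
    then have "(t2 * c) mod p * M div p = (t1 * c) mod p * M div p"
      using fun_cong[OF t12(3), of c] by (simp add: B_def)
    then show "\<bar>int ((t2 * c) mod p) - int ((t1 * c) mod p)\<bar> * int M < int p"
      by (rule abs_diff_mult_less_if_same_div[OF p])
    have "[int ((t2 * c) mod p) - int ((t1 * c) mod p) = int t2 * int c - int t1 * int c] (mod int p)"
      by (intro cong_diff) (simp_all add: cong_def zmod_int)
    then show "[int ((t2 * c) mod p) - int ((t1 * c) mod p) = int (t2 - t1) * int c] (mod int p)"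
      using t12 by (simp add: of_nat_diff left_diff_distrib)
  qed (use t12 in auto)
qed

lemma zp_fourier_dilation_preimage:
  assumes "p > 0" "coprime t p" "[t * u = 1] (mod p)"
  obtains b where "b < p" "[int t * int b = a] (mod int p)"
    "\<And>j. zp_fourier p (\<lambda>x. f ((t * x) mod p)) (j * a) = zp_fourier p f (j * int b)"
proof
  define b where "b = nat ((a * int u) mod int p)"
  show "b < p"
    using assms(1) by (simp add: b_def nat_less_iff)
  have b: "[int b = a * int u] (mod int p)"
    using assms(1) by (simp add: b_def cong_def)
  have "[int t * int b = a * (int t * int u)] (mod int p)"
    using cong_scalar_left[OF b, of "int t"] by (simp add: mult_ac)
  also have "[a * (int t * int u) = a * 1] (mod int p)"
    using assms(3) by (intro cong_scalar_left) (simp add: cong_int_iff[symmetric])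
  finally show "[int t * int b = a] (mod int p)"
    by simp
  fix j
  have "zp_fourier p (\<lambda>x. f ((t * x) mod p)) (j * a) = zp_fourier p f (j * a * int u)"
    by (rule zp_fourier_dilation[OF assms])
  also have "\<dots> = zp_fourier p f (j * int b)"
    using cong_scalar_left[OF cong_sym[OF b], of j] by (intro zp_fourier_cong[OF assms(1)]) (simp add: mult.assoc)
  finally show "zp_fourier p (\<lambda>x. f ((t * x) mod p)) (j * a) = zp_fourier p f (j * int b)" .
qed

lemma dilation_localizes_large_spectrum:
  fixes f :: "nat \<Rightarrow> real" and p K M :: nat
  assumes "prime p" "p > 2" "\<forall>x<p. \<bar>f x\<bar> \<le> 1" "\<delta> > 0" "2 / \<delta>\<^sup>2 < real K" "M \<ge> 1" "M ^ K < p"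
  obtains t :: nat and T :: "int set" where "coprime t p" "finite T" "card T \<le> K"
    "\<And>s. s \<in> T \<Longrightarrow> \<bar>s\<bar> * int M < int p"
    "\<And>a. a < p \<Longrightarrow> \<delta> \<le> norm (zp_fourier p (\<lambda>x. f ((t * x) mod p)) (- 2 * int a)) \<Longrightarrow>
      (\<exists>s\<in>T. [int a = s] (mod int p)) \<and> (\<exists>s\<in>T. [- 2 * int a = s] (mod int p))"
proof -
  define A where "A = large_spectrum p f \<delta> \<union> {b. b < p \<and> \<delta> \<le> norm (zp_fourier p f (- 2 * int b))}"
  have fin: "finite A" and card: "card A \<le> K"
    using card_large_spectrum_doubled[OF assms(1-5)] by (simp_all add: A_def large_spectrum_def)
  obtain t s where t: "0 < t" "t < p"
    and s: "\<And>c. c \<in> A \<Longrightarrow> [s c = int t * int c] (mod int p)"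
      "\<And>c. c \<in> A \<Longrightarrow> \<bar>s c\<bar> * int M < int p"
    using dirichlet_simultaneous_approximation[OF fin card assms(6,7)] by blast
  have "\<not> p dvd t"
    using t by (auto dest: dvd_imp_le)
  then have cop: "coprime t p"
    using prime_imp_coprime[OF assms(1)] coprime_commute by blast
  obtain u where u: "[t * u = 1] (mod p)"
    using cong_solve_coprime_nat[OF cop] by auto
  have p: "p > 0"
    using assms(2) by simp
  show ?thesis
  proof (rule that[OF cop, of "s ` A"])
    show "finite (s ` A)" "card (s ` A) \<le> K"
      using fin card card_image_le[OF fin, of s] by simp_all
    show "\<bar>x\<bar> * int M < int p" if "x \<in> s ` A" for x
      using that s(2) by blast
    fix a assume a: "a < p" "\<delta> \<le> norm (zp_fourier p (\<lambda>x. f ((t * x) mod p)) (- 2 * int a))"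
    obtain b where b: "b < p" "[int t * int b = int a] (mod int p)"
      "\<And>j. zp_fourier p (\<lambda>x. f ((t * x) mod p)) (j * int a) = zp_fourier p f (j * int b)"
      using zp_fourier_dilation_preimage[OF p cop u, where a = "int a" and f = f] by blast
    obtain b' where b': "b' < p" "[int t * int b' = - 2 * int a] (mod int p)"
      "\<And>j. zp_fourier p (\<lambda>x. f ((t * x) mod p)) (j * (- 2 * int a)) = zp_fourier p f (j * int b')"
      using zp_fourier_dilation_preimage[OF p cop u, where a = "- 2 * int a" and f = f] by blast
    have "b \<in> A" "b' \<in> A"
      using a(2) b(1) b(3)[of "- 2"] b'(1) b'(3)[of 1] by (simp_all add: A_def large_spectrum_def)
    then show "(\<exists>s\<in>s ` A. [int a = s] (mod int p)) \<and> (\<exists>s\<in>s ` A. [- 2 * int a = s] (mod int p))"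
      using cong_trans[OF s(1) b(2)] cong_trans[OF s(1) b'(2)] by (blast intro: cong_sym)
  qed
qed

section \<open>Bohr kernels\<close>

definition fejer :: "nat \<Rightarrow> nat \<Rightarrow> int \<Rightarrow> real \<Rightarrow> real" where
  "fejer p N s \<beta> = (norm (\<Sum>i<N. zp_exp p (of_int (int i * s) * \<beta>)))\<^sup>2 / real N"

definition bohr_kernel :: "nat \<Rightarrow> nat \<Rightarrow> int set \<Rightarrow> real \<Rightarrow> real" where
  "bohr_kernel p N T \<beta> = (\<Prod>s\<in>T. fejer p N s \<beta>)"

(*
  Expanding each Fejer factor as (1/N) sum_{i,j<N} e_p((i - j) s beta) writes the kernel as
  N^(-|T|) times a sum of characters, indexed by the choices sigma s = (i, j) for s in T.
*)
definition bohr_index :: "nat \<Rightarrow> int set \<Rightarrow> (int \<Rightarrow> nat \<times> nat) set" where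
  "bohr_index N T = T \<rightarrow>\<^sub>E {..<N} \<times> {..<N}"

definition bohr_freq :: "int set \<Rightarrow> (int \<Rightarrow> nat \<times> nat) \<Rightarrow> int" where
  "bohr_freq T \<sigma> = (\<Sum>s\<in>T. (int (fst (\<sigma> s)) - int (snd (\<sigma> s))) * s)"

lemma fejer_nonneg: "0 \<le> fejer p N s \<beta>"
  by (simp add: fejer_def)

lemma bohr_kernel_nonneg: "0 \<le> bohr_kernel p N T \<beta>"
  by (simp add: bohr_kernel_def prod_nonneg fejer_nonneg)

lemma fejer_expand:
  "complex_of_real (fejer p N s \<beta>) =
    (\<Sum>(i, j)\<in>{..<N} \<times> {..<N}. zp_exp p (of_int ((int i - int j) * s) * \<beta>)) / of_nat N"
proof -
  define P where "P = (\<Sum>i<N. zp_exp p (of_int (int i * s) * \<beta>))"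
  have "P * cnj P = (\<Sum>i<N. \<Sum>j<N. zp_exp p (of_int (int i * s) * \<beta>) * cnj (zp_exp p (of_int (int j * s) * \<beta>)))"
    by (simp add: P_def sum_product)
  also have "\<dots> = (\<Sum>(i, j)\<in>{..<N} \<times> {..<N}. zp_exp p (of_int ((int i - int j) * s) * \<beta>))"
    by (simp add: sum.cartesian_product zp_exp_minus[symmetric] zp_exp_add[symmetric] algebra_simps)
  finally show ?thesis
    by (simp only: fejer_def P_def[symmetric] of_real_divide of_real_of_nat_eq complex_norm_square)
qed

lemma bohr_kernel_expand:
  assumes "finite T"
  shows "complex_of_real (bohr_kernel p N T \<beta>) =
    (\<Sum>\<sigma>\<in>bohr_index N T. zp_exp p (of_int (bohr_freq T \<sigma>) * \<beta>)) / of_nat N ^ card T"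
proof -
  have "complex_of_real (bohr_kernel p N T \<beta>) =
      (\<Prod>s\<in>T. \<Sum>ij\<in>{..<N} \<times> {..<N}. zp_exp p (of_int ((int (fst ij) - int (snd ij)) * s) * \<beta>)) /
      of_nat N ^ card T"
    by (simp add: bohr_kernel_def fejer_expand case_prod_beta prod_dividef)
  also have "\<dots> = (\<Sum>\<sigma>\<in>bohr_index N T. \<Prod>s\<in>T.
      zp_exp p (of_int ((int (fst (\<sigma> s)) - int (snd (\<sigma> s))) * s) * \<beta>)) / of_nat N ^ card T"
    using assms by (simp add: bohr_index_def prod_sum_PiE)
  also have "\<dots> = (\<Sum>\<sigma>\<in>bohr_index N T. zp_exp p (of_int (bohr_freq T \<sigma>) * \<beta>)) / of_nat N ^ card T"
    by (simp add: bohr_freq_def zp_exp_sum[symmetric] sum_distrib_right)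
  finally show ?thesis .
qed

lemma finite_bohr_index [simp]: "finite T \<Longrightarrow> finite (bohr_index N T)"
  by (simp add: bohr_index_def finite_PiE)

lemma card_bohr_index: "finite T \<Longrightarrow> card (bohr_index N T) = N ^ (2 * card T)"
  by (simp add: bohr_index_def card_PiE power_mult power2_eq_square)

lemma abs_bohr_freq_le:
  assumes "\<sigma> \<in> bohr_index N T"
  shows "\<bar>bohr_freq T \<sigma>\<bar> \<le> int (N - 1) * (\<Sum>s\<in>T. \<bar>s\<bar>)"
proof -
  have "\<bar>(int (fst (\<sigma> s)) - int (snd (\<sigma> s))) * s\<bar> \<le> int (N - 1) * \<bar>s\<bar>" if "s \<in> T" for s
  proof -
    have "fst (\<sigma> s) < N" "snd (\<sigma> s) < N"
      using assms that by (auto simp: bohr_index_def PiE_iff mem_Times_iff)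
    then have "\<bar>int (fst (\<sigma> s)) - int (snd (\<sigma> s))\<bar> \<le> int (N - 1)"
      by linarith
    then show ?thesis
      by (simp add: abs_mult mult_right_mono)
  qed
  then have "\<bar>bohr_freq T \<sigma>\<bar> \<le> (\<Sum>s\<in>T. int (N - 1) * \<bar>s\<bar>)"
    unfolding bohr_freq_def by (rule order_trans[OF sum_abs sum_mono])
  then show ?thesis
    by (simp add: sum_distrib_left)
qed

lemma bohr_freq_bound:
  fixes M :: nat
  assumes "finite T" "card T \<le> K" "M \<ge> 1" "\<And>s. s \<in> T \<Longrightarrow> \<bar>s\<bar> * int M < int p"
  shows "real_of_int (int (N - 1) * (\<Sum>s\<in>T. \<bar>s\<bar>)) \<le> real N * real K * (real p / real M)"
proof -
  have "real_of_int (\<Sum>s\<in>T. \<bar>s\<bar>) \<le> (\<Sum>s\<in>T. real p / real M)"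
    unfolding of_int_sum
  proof (rule sum_mono)
    fix s assume "s \<in> T"
    then have "real_of_int \<bar>s\<bar> * real M < real p"
      using assms(4) by (metis of_int_less_iff of_int_mult of_int_of_nat_eq)
    then show "real_of_int \<bar>s\<bar> \<le> real p / real M"
      using assms(3) by (simp add: field_simps)
  qed
  also have "\<dots> \<le> real K * (real p / real M)"
    using assms(2) by (simp only: sum_constant) (intro mult_right_mono, simp_all)
  finally have "real (N - 1) * real_of_int (\<Sum>s\<in>T. \<bar>s\<bar>) \<le> real N * (real K * (real p / real M))"
    by (intro mult_mono) (simp_all add: sum_nonneg)
  then show ?thesis
    by (simp add: mult.assoc)
qed

lemma sum_bohr_kernel_progression:
  assumes "finite T" "p > 0"
  shows "(\<Sum>n<p. of_real (bohr_kernel p N T (\<beta> + of_int k * real n)) * zp_exp p (of_int (a * int n))) =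
    of_nat p * (\<Sum>\<sigma>\<in>{\<sigma> \<in> bohr_index N T. int p dvd k * bohr_freq T \<sigma> + a}.
      zp_exp p (of_int (bohr_freq T \<sigma>) * \<beta>)) / of_nat N ^ card T"
proof -
  have "(\<Sum>n<p. of_real (bohr_kernel p N T (\<beta> + of_int k * real n)) * zp_exp p (of_int (a * int n))) =
      (\<Sum>\<sigma>\<in>bohr_index N T. \<Sum>n<p. zp_exp p (of_int (bohr_freq T \<sigma>) * (\<beta> + of_int k * real n)) *
        zp_exp p (of_int (a * int n))) / of_nat N ^ card T"
    by (simp add: bohr_kernel_expand[OF assms(1)] sum_divide_distrib sum_distrib_right
        sum.swap[of _ "{..<p}"])
  also have "\<dots> = (\<Sum>\<sigma>\<in>bohr_index N T. if int p dvd k * bohr_freq T \<sigma> + a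
      then of_nat p * zp_exp p (of_int (bohr_freq T \<sigma>) * \<beta>) else 0) / of_nat N ^ card T"
    by (simp only: sum_zp_exp_progression[OF assms(2)])
  also have "\<dots> = of_nat p * (\<Sum>\<sigma>\<in>{\<sigma> \<in> bohr_index N T. int p dvd k * bohr_freq T \<sigma> + a}.
      zp_exp p (of_int (bohr_freq T \<sigma>) * \<beta>)) / of_nat N ^ card T"
    using assms(1) by (simp only: sum.inter_filter[symmetric] sum_distrib_left finite_bohr_index)
  finally show ?thesis .
qed

definition bohr_count :: "nat \<Rightarrow> nat \<Rightarrow> int set \<Rightarrow> int \<Rightarrow> nat" where
  "bohr_count p N T a = card {\<sigma> \<in> bohr_index N T. int p dvd bohr_freq T \<sigma> + a}"

lemma sum_bohr_kernel_zp_exp: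
  assumes "finite T" "p > 0"
  shows "(\<Sum>n<p. of_real (bohr_kernel p N T (real n)) * zp_exp p (of_int (a * int n))) =
    of_nat (p * bohr_count p N T a) / of_nat N ^ card T"
  using sum_bohr_kernel_progression[OF assms, of N 0 1 a] by (simp add: bohr_count_def)

lemma sum_bohr_kernel:
  assumes "finite T" "p > 0"
  shows "(\<Sum>n<p. bohr_kernel p N T (real n)) = real (p * bohr_count p N T 0) / real N ^ card T"
proof -
  have "complex_of_real (\<Sum>n<p. bohr_kernel p N T (real n)) = of_real (real (p * bohr_count p N T 0) / real N ^ card T)"
    using sum_bohr_kernel_zp_exp[OF assms, of N 0] by simp
  then show ?thesis
    by (simp only: of_real_eq_iff)
qed

lemma bohr_count_pos:
  assumes "finite T" "N \<ge> 1"
  shows "0 < bohr_count p N T 0"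
proof -
  have "(\<lambda>s\<in>T. (0, 0)) \<in> {\<sigma> \<in> bohr_index N T. int p dvd bohr_freq T \<sigma> + 0}"
    using assms(2) by (simp add: bohr_index_def bohr_freq_def)
  moreover have "finite (bohr_index N T)"
    using assms(1) by simp
  ultimately show ?thesis
    unfolding bohr_count_def by (metis (no_types, lifting) card_gt_0_iff empty_iff finite_subset mem_Collect_eq subsetI)
qed

lemma sum_bohr_kernel_pos:
  assumes "finite T" "p > 0" "N \<ge> 1"
  shows "0 < (\<Sum>n<p. bohr_kernel p N T (real n))"
  using bohr_count_pos[OF assms(1,3), of p] assms by (simp add: sum_bohr_kernel)

lemma bohr_count_le:
  assumes "finite T" "p > 0" "N \<ge> 1"
  shows "bohr_count p N T a \<le> bohr_count p N T 0"
proof -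
  have "real (p * bohr_count p N T a) / real N ^ card T =
      norm (\<Sum>n<p. of_real (bohr_kernel p N T (real n)) * zp_exp p (of_int (a * int n)))"
    by (simp only: sum_bohr_kernel_zp_exp[OF assms(1,2)]) (simp add: norm_divide norm_power norm_mult)
  also have "\<dots> \<le> (\<Sum>n<p. bohr_kernel p N T (real n))"
    by (rule order_trans[OF norm_sum]) (simp add: norm_mult bohr_kernel_nonneg)
  also have "\<dots> = real (p * bohr_count p N T 0) / real N ^ card T"
    by (rule sum_bohr_kernel[OF assms(1,2)])
  finally show ?thesis
    using assms by (simp add: divide_le_cancel)
qed

lemma bohr_count_cong:
  assumes "[a = b] (mod int p)"
  shows "bohr_count p N T a = bohr_count p N T b"
proof -
  have "int p dvd \<nu> + a \<longleftrightarrow> int p dvd \<nu> + b" for \<nu>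
    using assms by (simp add: cong_dvd_iff cong_add cong_refl)
  then show ?thesis
    by (simp add: bohr_count_def)
qed

lemma bohr_count_remove:
  assumes "finite T" "s \<in> T"
  shows "N * bohr_count p N (T - {s}) 0 \<le> bohr_count p N T 0"
proof -
  let ?A = "{\<sigma> \<in> bohr_index N (T - {s}). int p dvd bohr_freq (T - {s}) \<sigma> + 0}"
  let ?B = "{\<sigma> \<in> bohr_index N T. int p dvd bohr_freq T \<sigma> + 0}"
  \<comment> \<open>Extending by a diagonal pair at \<open>s\<close> does not change the frequency.\<close>
  define ext :: "(int \<Rightarrow> nat \<times> nat) \<times> nat \<Rightarrow> int \<Rightarrow> nat \<times> nat"
    where "ext = (\<lambda>(\<sigma>, i). \<sigma>(s := (i, i)))"
  have freq: "bohr_freq T (\<sigma>(s := (i, i))) = bohr_freq (T - {s}) \<sigma>" for \<sigma> i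
    using assms by (simp add: bohr_freq_def sum.remove)
  have "\<sigma>(s := (i, i)) \<in> bohr_index N T" if "\<sigma> \<in> bohr_index N (T - {s})" "i < N" for \<sigma> i
    using PiE_fun_upd[of "(i, i)" "\<lambda>_. {..<N} \<times> {..<N}" s \<sigma> "T - {s}"] that
    by (simp add: bohr_index_def insert_absorb[OF assms(2)])
  then have "ext ` (?A \<times> {..<N}) \<subseteq> ?B"
    by (auto simp: ext_def freq)
  moreover have "inj_on ext (?A \<times> {..<N})"
  proof (rule inj_onI)
    fix x y assume "x \<in> ?A \<times> {..<N}" "y \<in> ?A \<times> {..<N}" and eq: "ext x = ext y"
    then obtain \<sigma> i \<tau> j where x: "x = (\<sigma>, i)" and y: "y = (\<tau>, j)"
      and mem: "\<sigma> \<in> (T - {s}) \<rightarrow>\<^sub>E {..<N} \<times> {..<N}"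
        "\<tau> \<in> (T - {s}) \<rightarrow>\<^sub>E {..<N} \<times> {..<N}"
      by (auto simp: bohr_index_def)
    from mem have "\<sigma> = \<tau>"
    proof (rule PiE_ext)
      show "\<sigma> t = \<tau> t" if "t \<in> T - {s}" for t
        using that fun_cong[OF eq, of t] by (simp add: ext_def x y)
    qed
    moreover have "i = j"
      using fun_cong[OF eq, of s] by (simp add: ext_def x y)
    ultimately show "x = y"
      by (simp add: x y)
  qed
  moreover have "finite ?B"
    using assms(1) by simp
  ultimately have "card (?A \<times> {..<N}) \<le> card ?B"
    by (intro card_inj_on_le)
  then show ?thesis
    by (simp add: bohr_count_def card_cartesian_product mult.commute)
qed

lemma sum_bohr_kernel_remove_le:
  assumes "finite T" "p > 0" "N \<ge> 1" "s \<in> T"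
  shows "(\<Sum>n<p. bohr_kernel p N (T - {s}) (real n)) \<le> (\<Sum>n<p. bohr_kernel p N T (real n))"
proof -
  have "card T = Suc (card (T - {s}))"
    using assms(1,4) by (metis card_Suc_Diff1)
  then have card: "real N ^ card T = real N * real N ^ card (T - {s})"
    by simp
  have "real (p * bohr_count p N (T - {s}) 0) / real N ^ card (T - {s}) =
      real p * (real N * real (bohr_count p N (T - {s}) 0)) / real N ^ card T"
    using assms(3) by (simp add: card)
  also have "\<dots> \<le> real p * real (bohr_count p N T 0) / real N ^ card T"
    using bohr_count_remove[OF assms(1,4), of N p]
    by (intro divide_right_mono mult_left_mono) (simp_all flip: of_nat_mult)
  finally show ?thesis
    using assms(1,2) by (simp add: sum_bohr_kernel)
qed

lemma dvd_bohr_freq_iff: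
  assumes "\<sigma> \<in> bohr_index N T" "int (N - 1) * (\<Sum>s\<in>T. \<bar>s\<bar>) < int p"
  shows "int p dvd bohr_freq T \<sigma> \<longleftrightarrow> bohr_freq T \<sigma> = 0"
  using abs_bohr_freq_le[OF assms(1)] assms(2) dvd_imp_le_int[of "bohr_freq T \<sigma>" "int p"] by auto

(* Every frequency is smaller than p, so a full period averages out all but frequency 0. *)
lemma sum_bohr_kernel_unit_progression:
  assumes "finite T" "p > 0" "int (N - 1) * (\<Sum>s\<in>T. \<bar>s\<bar>) < int p" "\<bar>k\<bar> = 1"
  shows "(\<Sum>n<p. bohr_kernel p N T (\<beta> + of_int k * real n)) = (\<Sum>n<p. bohr_kernel p N T (real n))"
proof -
  let ?Z = "{\<sigma> \<in> bohr_index N T. bohr_freq T \<sigma> = 0}"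
  have "complex_of_real (\<Sum>n<p. bohr_kernel p N T (\<gamma> + of_int j * real n)) =
      of_nat p * of_nat (card ?Z) / of_nat N ^ card T" if "\<bar>j\<bar> = 1" for \<gamma> j
  proof -
    have "is_unit j"
      using that by simp
    then have "{\<sigma> \<in> bohr_index N T. int p dvd j * bohr_freq T \<sigma> + 0} = ?Z"
      using dvd_bohr_freq_iff[OF _ assms(3)] by (auto simp: dvd_mult_unit_iff')
    moreover have "(\<Sum>\<sigma>\<in>?Z. zp_exp p (of_int (bohr_freq T \<sigma>) * \<gamma>)) = of_nat (card ?Z)"
      by (subst sum.cong[OF refl, of _ _ "\<lambda>_. 1"]) auto
    ultimately show ?thesis
      using sum_bohr_kernel_progression[OF assms(1,2), of N \<gamma> j 0] by simp
  qed
  from this[of 1 0] this[OF assms(4), of \<beta>] show ?thesis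
    by (simp only: abs_one of_int_1 mult_1 add_0 simp_thms) (metis of_real_eq_iff)
qed

(* The normalised Fourier coefficient of the kernel, see sum_bohr_kernel_shift_zp_exp. *)
definition bohr_multiplier :: "nat \<Rightarrow> nat \<Rightarrow> int set \<Rightarrow> int \<Rightarrow> real" where
  "bohr_multiplier p N T a = real (bohr_count p N T a) / real (bohr_count p N T 0)"

lemma bohr_multiplier_nonneg: "0 \<le> bohr_multiplier p N T a"
  by (simp add: bohr_multiplier_def)

lemma bohr_multiplier_le_1:
  assumes "finite T" "p > 0" "N \<ge> 1"
  shows "bohr_multiplier p N T a \<le> 1"
  using bohr_count_le[OF assms, of a] bohr_count_pos[OF assms(1,3), of p]
  by (simp add: bohr_multiplier_def)

lemma bohr_multiplier_cong:
  "[a = b] (mod int p) \<Longrightarrow> bohr_multiplier p N T a = bohr_multiplier p N T b"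
  by (simp add: bohr_multiplier_def bohr_count_cong)

lemma sum_bohr_kernel_shift_zp_exp:
  assumes "finite T" "p > 0" "N \<ge> 1"
  shows "(\<Sum>n<p. of_real (bohr_kernel p N T (real n - real x)) * zp_exp p (of_int (a * int n))) =
    of_real ((\<Sum>n<p. bohr_kernel p N T (real n)) * bohr_multiplier p N T a) * zp_exp p (of_int (a * int x))"
proof -
  let ?A = "{\<sigma> \<in> bohr_index N T. int p dvd 1 * bohr_freq T \<sigma> + a}"
  have "zp_exp p (of_int (bohr_freq T \<sigma>) * - real x) = zp_exp p (of_int (a * int x))" if "\<sigma> \<in> ?A" for \<sigma>
  proof -
    have "int p dvd - (bohr_freq T \<sigma> + a)"
      using that dvd_minus_iff[of "int p" "bohr_freq T \<sigma> + a"] by simp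
    then have "[- bohr_freq T \<sigma> * int x = a * int x] (mod int p)"
      by (intro cong_mult cong_refl) (simp add: cong_iff_dvd_diff)
    then show ?thesis
      using zp_exp_cong[OF assms(2)] by fastforce
  qed
  then have "(\<Sum>\<sigma>\<in>?A. zp_exp p (of_int (bohr_freq T \<sigma>) * - real x)) =
      of_nat (bohr_count p N T a) * zp_exp p (of_int (a * int x))"
    by (simp add: bohr_count_def)
  moreover have "(\<Sum>n<p. bohr_kernel p N T (real n)) * bohr_multiplier p N T a =
      real (p * bohr_count p N T a) / real N ^ card T"
    using bohr_count_pos[OF assms(1,3), of p] by (simp add: sum_bohr_kernel[OF assms(1,2)] bohr_multiplier_def)
  ultimately show ?thesis
    using sum_bohr_kernel_progression[OF assms(1,2), of N "- real x" 1 a] by (simp add: mult_ac)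
qed

lemma fejer_mult_norm_one_minus_le:
  assumes "N \<ge> 1"
  shows "fejer p N s \<beta> * (norm (1 - zp_exp p (of_int s * \<beta>)))\<^sup>2 \<le> 4 / real N"
proof -
  define z where "z = zp_exp p (of_int s * \<beta>)"
  have "(\<Sum>i<N. zp_exp p (of_int (int i * s) * \<beta>)) * (1 - z) = 1 - z ^ N"
    using one_diff_power_eq[of z N] by (simp add: z_def zp_exp_power mult.commute mult.left_commute)
  moreover have "norm (1 - z ^ N) \<le> 2"
    using norm_triangle_ineq4[of 1 "z ^ N"] by (simp add: z_def norm_power)
  ultimately have "(norm ((\<Sum>i<N. zp_exp p (of_int (int i * s) * \<beta>)) * (1 - z)))\<^sup>2 \<le> 2\<^sup>2"
    by (metis norm_ge_zero power_mono)
  then show ?thesis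
    using assms by (simp add: fejer_def z_def norm_mult power_mult_distrib divide_right_mono)
qed

lemma sum_bohr_kernel_norm_one_minus_squared:
  assumes "finite T" "p > 0" "N \<ge> 1"
  shows "(\<Sum>n<p. bohr_kernel p N T (real n) * (norm (1 - zp_exp p (of_int s * real n)))\<^sup>2) =
    (\<Sum>n<p. bohr_kernel p N T (real n)) * (2 - bohr_multiplier p N T s - bohr_multiplier p N T (- s))"
proof -
  define K where "K = bohr_kernel p N T"
  define Z where "Z = (\<Sum>n<p. K (real n))"
  have fourier: "(\<Sum>n<p. of_real (K (real n)) * zp_exp p (of_int (a * int n))) =
      of_real (Z * bohr_multiplier p N T a)" for a
    using sum_bohr_kernel_shift_zp_exp[OF assms, of 0 a] by (simp add: K_def Z_def)
  have "complex_of_real ((norm (1 - zp_exp p (of_int s * real n)))\<^sup>2) =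
      2 - zp_exp p (of_int (s * int n)) - zp_exp p (of_int (- s * int n))" for n
    using norm_one_minus_squared[of "zp_exp p (of_int s * real n)"] by (simp add: zp_exp_minus)
  then have "complex_of_real (\<Sum>n<p. K (real n) * (norm (1 - zp_exp p (of_int s * real n)))\<^sup>2) =
      (\<Sum>n<p. of_real (K (real n)) * (2 - zp_exp p (of_int (s * int n)) - zp_exp p (of_int (- s * int n))))"
    by (simp only: of_real_sum of_real_mult)
  also have "\<dots> = 2 * of_real Z - (\<Sum>n<p. of_real (K (real n)) * zp_exp p (of_int (s * int n))) -
      (\<Sum>n<p. of_real (K (real n)) * zp_exp p (of_int (- s * int n)))"
    by (simp add: Z_def algebra_simps sum_subtractf sum_distrib_left sum.distrib)
  also have "\<dots> = of_real (Z * (2 - bohr_multiplier p N T s - bohr_multiplier p N T (- s)))"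
    by (simp only: fourier) (simp add: algebra_simps)
  finally show ?thesis
    by (simp only: of_real_eq_iff K_def Z_def)
qed

(* The Fejer factor at s is small wherever e_p(s n) is far from 1. *)
lemma bohr_multiplier_ge:
  assumes "finite T" "p > 0" "N \<ge> 1" "s \<in> T"
  shows "1 - 4 / real N \<le> bohr_multiplier p N T s"
proof -
  define K where "K = bohr_kernel p N T"
  define R where "R = bohr_kernel p N (T - {s})"
  define Z where "Z = (\<Sum>n<p. K (real n))"
  define z where "z n = zp_exp p (of_int s * real n)" for n
  have "K (real n) * (norm (1 - z n))\<^sup>2 \<le> 4 / real N * R (real n)" for n
  proof -
    have "K (real n) * (norm (1 - z n))\<^sup>2 = (fejer p N s (real n) * (norm (1 - z n))\<^sup>2) * R (real n)"
      using assms(1,4) by (simp add: K_def R_def bohr_kernel_def prod.remove mult_ac)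
    also have "\<dots> \<le> 4 / real N * R (real n)"
      unfolding z_def R_def
      by (rule mult_right_mono[OF fejer_mult_norm_one_minus_le[OF assms(3)] bohr_kernel_nonneg])
    finally show ?thesis .
  qed
  then have "(\<Sum>n<p. K (real n) * (norm (1 - z n))\<^sup>2) \<le> 4 / real N * (\<Sum>n<p. R (real n))"
    by (simp add: sum_mono sum_distrib_left)
  also have "\<dots> \<le> 4 / real N * Z"
    using sum_bohr_kernel_remove_le[OF assms] unfolding R_def Z_def K_def by (intro mult_left_mono) simp_all
  finally have "Z * (2 - bohr_multiplier p N T s - bohr_multiplier p N T (- s)) \<le> Z * (4 / real N)"
    using sum_bohr_kernel_norm_one_minus_squared[OF assms(1-3), of s] by (simp add: K_def Z_def z_def mult.commute)
  moreover have "Z > 0"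
    using sum_bohr_kernel_pos[OF assms(1-3)] by (simp add: Z_def K_def)
  ultimately have "2 - bohr_multiplier p N T s - bohr_multiplier p N T (- s) \<le> 4 / real N"
    by (simp only: mult_le_cancel_left_pos)
  then show ?thesis
    using bohr_multiplier_le_1[OF assms(1-3), of "- s"] by linarith
qed

section \<open>Smoothing by a Bohr kernel\<close>

definition bohr_smooth :: "nat \<Rightarrow> nat \<Rightarrow> int set \<Rightarrow> (nat \<Rightarrow> real) \<Rightarrow> real \<Rightarrow> real" where
  "bohr_smooth p N T h \<alpha> =
    (\<Sum>x<p. h x * bohr_kernel p N T (\<alpha> - real x)) / (\<Sum>n<p. bohr_kernel p N T (real n))"

lemma bohr_smooth_bounds:
  assumes "finite T" "p > 0" "N \<ge> 1" "int (N - 1) * (\<Sum>s\<in>T. \<bar>s\<bar>) < int p"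
    and "\<forall>x<p. 0 \<le> h x \<and> h x \<le> 1"
  shows "0 \<le> bohr_smooth p N T h \<alpha> \<and> bohr_smooth p N T h \<alpha> \<le> 1"
proof -
  have "(\<Sum>x<p. h x * bohr_kernel p N T (\<alpha> - real x)) \<le> (\<Sum>x<p. bohr_kernel p N T (\<alpha> - real x))"
    using assms(5) by (intro sum_mono) (simp add: mult_left_le_one_le bohr_kernel_nonneg)
  also have "\<dots> = (\<Sum>n<p. bohr_kernel p N T (real n))"
    using sum_bohr_kernel_unit_progression[OF assms(1-2,4), of "- 1" \<alpha>] by simp
  finally show ?thesis
    using assms(5) sum_bohr_kernel_pos[OF assms(1-3)]
    by (auto simp: bohr_smooth_def bohr_kernel_nonneg intro!: sum_nonneg divide_nonneg_pos)
qed

lemma sum_bohr_smooth: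
  assumes "finite T" "p > 0" "N \<ge> 1" "int (N - 1) * (\<Sum>s\<in>T. \<bar>s\<bar>) < int p"
  shows "(\<Sum>n<p. bohr_smooth p N T h (real n)) = (\<Sum>x<p. h x)"
proof -
  have "(\<Sum>n<p. \<Sum>x<p. h x * bohr_kernel p N T (real n - real x)) =
      (\<Sum>x<p. \<Sum>n<p. h x * bohr_kernel p N T (real n - real x))"
    by (rule sum.swap)
  also have "\<dots> = (\<Sum>x<p. h x * (\<Sum>n<p. bohr_kernel p N T (- real x + of_int 1 * real n)))"
    by (simp add: sum_distrib_left)
  also have "\<dots> = (\<Sum>x<p. h x) * (\<Sum>n<p. bohr_kernel p N T (real n))"
    by (simp only: sum_bohr_kernel_unit_progression[OF assms(1-2,4)] abs_one sum_distrib_right)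
  finally show ?thesis
    using sum_bohr_kernel_pos[OF assms(1-3)] by (simp add: bohr_smooth_def sum_divide_distrib[symmetric])
qed

lemma zp_fourier_bohr_smooth:
  assumes "finite T" "p > 0" "N \<ge> 1"
  shows "zp_fourier p (\<lambda>n. bohr_smooth p N T h (real n)) a =
    of_real (bohr_multiplier p N T a) * zp_fourier p h a"
proof -
  define Z where "Z = (\<Sum>n<p. bohr_kernel p N T (real n))"
  define t where "t n x = of_real (h x) * (of_real (bohr_kernel p N T (real n - real x)) *
      zp_exp p (of_int (a * int n)))" for n x
  have "(\<Sum>n<p. of_real (bohr_smooth p N T h (real n)) * zp_exp p (of_int (a * int n))) =
      (\<Sum>n<p. \<Sum>x<p. t n x) / of_real Z"
    unfolding bohr_smooth_def Z_def[symmetric]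
    by (simp only: t_def of_real_divide of_real_sum of_real_mult times_divide_eq_left
        sum_divide_distrib[symmetric] sum_distrib_right mult.assoc)
  also have "\<dots> = (\<Sum>x<p. \<Sum>n<p. t n x) / of_real Z"
    by (subst sum.swap) (rule refl)
  also have "\<dots> = (\<Sum>x<p. of_real (h x) * (\<Sum>n<p. of_real (bohr_kernel p N T (real n - real x)) *
      zp_exp p (of_int (a * int n)))) / of_real Z"
    by (simp only: t_def sum_distrib_left)
  also have "\<dots> = of_real (bohr_multiplier p N T a) *
      (\<Sum>x<p. of_real (h x) * zp_exp p (of_int (a * int x)))"
    using sum_bohr_kernel_pos[OF assms]
    by (simp only: sum_bohr_kernel_shift_zp_exp[OF assms] Z_def[symmetric])
      (simp add: sum_distrib_left sum_divide_distrib mult_ac)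
  finally show ?thesis
    by (simp add: zp_fourier_def)
qed

lemma bohr_smooth_Lambda3_close:
  assumes "finite T" "p > 0" "N \<ge> 4" "\<forall>x<p. 0 \<le> h x \<and> h x \<le> 1" "0 \<le> \<delta>"
    and large: "\<And>a. a < p \<Longrightarrow> \<delta> \<le> norm (zp_fourier p h (- 2 * int a)) \<Longrightarrow>
      (\<exists>s\<in>T. [int a = s] (mod int p)) \<and> (\<exists>s\<in>T. [- 2 * int a = s] (mod int p))"
  shows "\<bar>zp_Lambda3 p (\<lambda>n. bohr_smooth p N T h (real n)) - zp_Lambda3 p h\<bar> \<le> 2 * \<delta> + 12 / real N"
proof -
  have N: "N \<ge> 1"
    using assms(3) by simp
  have "\<bar>zp_Lambda3 p (\<lambda>n. bohr_smooth p N T h (real n)) - zp_Lambda3 p h\<bar> \<le> 2 * \<delta> + 3 * (4 / real N)"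
  proof (rule zp_Lambda3_multiplier_close[OF assms(2) _ assms(5)])
    show "\<forall>x<p. \<bar>h x\<bar> \<le> 1"
      using assms(4) by auto
    show "0 \<le> 4 / real N" "4 / real N \<le> 1"
      using assms(3) by simp_all
    show "zp_fourier p (\<lambda>n. bohr_smooth p N T h (real n)) a = of_real (bohr_multiplier p N T a) * zp_fourier p h a"
      for a by (rule zp_fourier_bohr_smooth[OF assms(1,2) N])
    show "\<bar>bohr_multiplier p N T a\<bar> \<le> 1" for a
      using bohr_multiplier_nonneg bohr_multiplier_le_1[OF assms(1,2) N] by simp
    show "1 - 4 / real N \<le> bohr_multiplier p N T (int a) \<and> 1 - 4 / real N \<le> bohr_multiplier p N T (- 2 * int a)"
      if "a < p" "\<delta> \<le> norm (zp_fourier p h (- 2 * int a))" for a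
      using large[OF that] bohr_multiplier_ge[OF assms(1,2) N] bohr_multiplier_cong by metis
  qed
  then show ?thesis
    by simp
qed

lemma bohr_smooth_expand:
  assumes "finite T" "p > 0"
  shows "complex_of_real (bohr_smooth p N T h \<alpha>) =
    (\<Sum>\<sigma>\<in>bohr_index N T. zp_exp p (of_int (bohr_freq T \<sigma>) * \<alpha>) *
      zp_fourier p h (- bohr_freq T \<sigma>)) * of_nat p /
    (of_nat N ^ card T * of_real (\<Sum>n<p. bohr_kernel p N T (real n)))"
proof -
  define Z where "Z = (\<Sum>n<p. bohr_kernel p N T (real n))"
  define t where "t x \<sigma> = zp_exp p (of_int (bohr_freq T \<sigma>) * \<alpha>) *
      (of_real (h x) * zp_exp p (of_int (- bohr_freq T \<sigma> * int x)))" for x \<sigma>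
  have split: "zp_exp p (of_int \<nu> * (\<alpha> - real x)) =
      zp_exp p (of_int \<nu> * \<alpha>) * zp_exp p (of_int (- \<nu> * int x))" for \<nu> x
    by (simp add: zp_exp_add[symmetric] algebra_simps)
  have "complex_of_real (bohr_smooth p N T h \<alpha>) =
      (\<Sum>x<p. of_real (h x) * of_real (bohr_kernel p N T (\<alpha> - real x))) / of_real Z"
    by (simp only: bohr_smooth_def Z_def[symmetric] of_real_divide of_real_sum of_real_mult)
  also have "\<dots> = (\<Sum>x<p. \<Sum>\<sigma>\<in>bohr_index N T. t x \<sigma>) / (of_nat N ^ card T * of_real Z)"
    by (simp only: bohr_kernel_expand[OF assms(1)] split)
      (simp add: t_def sum_distrib_left sum_divide_distrib mult_ac)
  also have "\<dots> = (\<Sum>\<sigma>\<in>bohr_index N T. \<Sum>x<p. t x \<sigma>) / (of_nat N ^ card T * of_real Z)"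
    by (subst sum.swap) (rule refl)
  also have "\<dots> = (\<Sum>\<sigma>\<in>bohr_index N T. zp_exp p (of_int (bohr_freq T \<sigma>) * \<alpha>) *
      (zp_fourier p h (- bohr_freq T \<sigma>) * of_nat p)) / (of_nat N ^ card T * of_real Z)"
    using assms(2) by (simp add: t_def zp_fourier_def sum_distrib_left)
  also have "\<dots> = (\<Sum>\<sigma>\<in>bohr_index N T. zp_exp p (of_int (bohr_freq T \<sigma>) * \<alpha>) *
      zp_fourier p h (- bohr_freq T \<sigma>)) * of_nat p / (of_nat N ^ card T * of_real Z)"
    by (simp add: sum_distrib_right mult.assoc)
  finally show ?thesis
    by (simp only: Z_def)
qed

lemma bohr_smooth_eq_sum_frequencies:
  assumes "finite T" "p > 0" "finite C" "(\<lambda>\<sigma>. - bohr_freq T \<sigma>) ` bohr_index N T \<subseteq> C"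
  shows "complex_of_real (bohr_smooth p N T h \<alpha>) = (\<Sum>c\<in>C. zp_exp p (of_int (- c) * \<alpha>) *
    (of_nat p * of_nat (card {\<sigma> \<in> bohr_index N T. - bohr_freq T \<sigma> = c}) * zp_fourier p h c /
      (of_nat N ^ card T * of_real (\<Sum>n<p. bohr_kernel p N T (real n)))))"
proof -
  define G where "G c = zp_exp p (of_int (- c) * \<alpha>) * zp_fourier p h c" for c
  have fibres: "(\<Sum>\<sigma>\<in>bohr_index N T. zp_exp p (of_int (bohr_freq T \<sigma>) * \<alpha>) *
      zp_fourier p h (- bohr_freq T \<sigma>)) =
      (\<Sum>c\<in>C. of_nat (card {\<sigma> \<in> bohr_index N T. - bohr_freq T \<sigma> = c}) * G c)"
    using sum_comp_eq_sum_card_fibres[OF finite_bohr_index[OF assms(1)] assms(3,4), of G] by (simp add: G_def)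
  show ?thesis
    unfolding bohr_smooth_expand[OF assms(1,2)] fibres
    by (simp add: G_def sum_distrib_left sum_distrib_right sum_divide_distrib mult_ac)
qed

lemma exists_padded_enumeration:
  fixes F :: "int set"
  assumes "finite F" "card F \<le> m"
  obtains c where "bij_betw c {1..m} (c ` {1..m})" "F \<subseteq> c ` {1..m}" "c ` {1..m} \<subseteq> F \<union> {0..<int m}"
proof -
  have fin: "finite (F \<union> {0..<int m})"
    using assms(1) by simp
  moreover have "m \<le> card (F \<union> {0..<int m})"
    using card_mono[OF fin, of "{0..<int m}"] by simp
  ultimately obtain C where C: "F \<subseteq> C" "C \<subseteq> F \<union> {0..<int m}" "card C = m"
    using exists_subset_between[OF assms(2) _ Un_upper1] by blast
  moreover obtain c where "bij_betw c {1..m} C"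
    using ex_bij_betw_nat_finite_1[OF finite_subset[OF C(2) fin]] C(3) by auto
  ultimately show ?thesis
    using that[of c] by (simp add: bij_betw_def)
qed

lemma inj_on_mod_if_small:
  fixes c :: "'a \<Rightarrow> int"
  assumes "inj_on c I" "\<And>i. i \<in> I \<Longrightarrow> real_of_int \<bar>c i\<bar> < Q" "2 * Q \<le> real p"
  shows "inj_on (\<lambda>i. c i mod int p) I"
proof (rule inj_onI)
  fix i j assume ij: "i \<in> I" "j \<in> I" "c i mod int p = c j mod int p"
  then have "real_of_int \<bar>c i - c j\<bar> < real p"
    using assms(2)[of i] assms(2)[of j] assms(3) by linarith
  moreover have "int p dvd c i - c j"
    using ij(3) by (simp add: mod_eq_dvd_iff)
  ultimately have "c i = c j"
    using dvd_imp_le_int[of "c i - c j" "int p"] by fastforce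
  then show "i = j"
    using assms(1) ij(1,2) by (auto dest: inj_onD)
qed

lemma bohr_smooth_trigonometric_form:
  fixes Q :: real and m :: nat
  assumes "finite T" "p > 0" "N ^ (2 * card T) \<le> m" "real m < Q" "2 * Q \<le> real p"
    and "real_of_int (int (N - 1) * (\<Sum>s\<in>T. \<bar>s\<bar>)) < Q"
  obtains c :: "nat \<Rightarrow> int" and \<gamma> :: "nat \<Rightarrow> complex" where
    "inj_on (\<lambda>i. c i mod int p) {1..m}" "\<forall>i\<in>{1..m}. real_of_int \<bar>c i\<bar> < Q"
    "\<forall>\<alpha>. complex_of_real (bohr_smooth p N T h \<alpha>) = (1 / of_nat p) *
      (\<Sum>i=1..m. exp (- 2 * of_real pi * \<i> * of_int (c i) * of_real \<alpha> / of_nat p) * \<gamma> i)"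
proof -
  define F where "F = (\<lambda>\<sigma>. - bohr_freq T \<sigma>) ` bohr_index N T"
  have "finite F" "card F \<le> card (bohr_index N T)"
    using assms(1) unfolding F_def by (simp_all add: card_image_le)
  then have "finite F" "card F \<le> m"
    using card_bohr_index[OF assms(1), of N] assms(3) by simp_all
  then obtain c where c: "bij_betw c {1..m} (c ` {1..m})" "F \<subseteq> c ` {1..m}"
    "c ` {1..m} \<subseteq> F \<union> {0..<int m}"
    by (rule exists_padded_enumeration)
  have small: "real_of_int \<bar>c i\<bar> < Q" if "i \<in> {1..m}" for i
  proof (cases "c i \<in> F")
    case True
    then have "\<bar>c i\<bar> \<le> int (N - 1) * (\<Sum>s\<in>T. \<bar>s\<bar>)"
      using abs_bohr_freq_le by (auto simp: F_def)
    then show ?thesis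
      using assms(6) by (smt (verit) of_int_le_iff)
  next
    case False
    then have "c i \<in> {0..<int m}"
      using c(3) that by blast
    then show ?thesis
      using assms(4) by simp
  qed
  \<comment> \<open>Padded frequencies have an empty fibre and hence coefficient 0.\<close>
  define W where "W x = of_nat p * of_nat (card {\<sigma> \<in> bohr_index N T. - bohr_freq T \<sigma> = x}) *
      zp_fourier p h x / (of_nat N ^ card T * of_real (\<Sum>n<p. bohr_kernel p N T (real n)))" for x
  show ?thesis
  proof (rule that[of c "\<lambda>i. of_nat p * W (c i)"])
    show "inj_on (\<lambda>i. c i mod int p) {1..m}"
      using c(1) small assms(5) by (intro inj_on_mod_if_small) (auto simp: bij_betw_def)
    show "\<forall>i\<in>{1..m}. real_of_int \<bar>c i\<bar> < Q"
      using small by blast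
    show "\<forall>\<alpha>. complex_of_real (bohr_smooth p N T h \<alpha>) = (1 / of_nat p) *
      (\<Sum>i=1..m. exp (- 2 * of_real pi * \<i> * of_int (c i) * of_real \<alpha> / of_nat p) * (of_nat p * W (c i)))"
    proof
      fix \<alpha>
      have "complex_of_real (bohr_smooth p N T h \<alpha>) = (\<Sum>x\<in>c ` {1..m}. zp_exp p (of_int (- x) * \<alpha>) * W x)"
        unfolding W_def using c(2) by (intro bohr_smooth_eq_sum_frequencies[OF assms(1,2)]) (simp_all add: F_def)
      also have "\<dots> = (\<Sum>i=1..m. zp_exp p (of_int (- c i) * \<alpha>) * W (c i))"
        by (rule sum.reindex_bij_betw[OF c(1), symmetric])
      also have "\<dots> = (1 / of_nat p) *
          (\<Sum>i=1..m. exp (- 2 * of_real pi * \<i> * of_int (c i) * of_real \<alpha> / of_nat p) * (of_nat p * W (c i)))"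
        using assms(2) unfolding zp_exp_eq_exp by (simp add: sum_distrib_left)
      finally show "complex_of_real (bohr_smooth p N T h \<alpha>) = (1 / of_nat p) *
          (\<Sum>i=1..m. exp (- 2 * of_real pi * \<i> * of_int (c i) * of_real \<alpha> / of_nat p) * (of_nat p * W (c i)))" .
    qed
  qed
qed

lemma pow_less_imp_less_powr:
  fixes x y :: real
  assumes "n > 0" "0 \<le> x" "x ^ n < y"
  shows "x < y powr (1 / real n)"
proof (cases "x = 0")
  case True
  then show ?thesis
    using assms by (simp add: zero_power)
next
  case False
  then have "x = (x ^ n) powr (1 / real n)"
    using assms by (simp add: powr_realpow[symmetric] powr_powr)
  also have "\<dots> < y powr (1 / real n)"
    using assms False by (intro powr_less_mono2) simp_all
  finally show ?thesis .
qed

lemma pow_le_imp_le_powr: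
  fixes x y :: real
  assumes "n > 0" "0 \<le> x" "x ^ n \<le> y"
  shows "x \<le> y powr (1 / real n)"
proof (cases "x = 0")
  case True
  then show ?thesis
    by simp
next
  case False
  then have "x = (x ^ n) powr (1 / real n)"
    using assms by (simp add: powr_realpow[symmetric] powr_powr)
  also have "\<dots> \<le> y powr (1 / real n)"
    using assms by (intro powr_mono2) simp_all
  finally show ?thesis .
qed

lemma exists_nat_between_quarter_half:
  fixes r :: real
  assumes "4 \<le> r"
  obtains M :: nat where "1 \<le> M" "real M \<le> r / 2" "r / 4 \<le> real M"
proof
  have M: "real (nat \<lfloor>r / 2\<rfloor>) = of_int \<lfloor>r / 2\<rfloor>"
    using assms by simp
  show "real (nat \<lfloor>r / 2\<rfloor>) \<le> r / 2" "r / 4 \<le> real (nat \<lfloor>r / 2\<rfloor>)"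
    unfolding M using assms by linarith+
  then show "1 \<le> nat \<lfloor>r / 2\<rfloor>"
    using assms by simp
qed

lemma exists_dirichlet_parameter:
  fixes N K m p :: nat
  assumes "K \<ge> 1" "2 * K \<le> m" "4 ^ K \<le> p" "(4 * N * K) ^ (2 * K) < p"
  obtains M where "M \<ge> 1" "M ^ K < p" "real N * real K * (real p / real M) < real p powr (1 - 1 / real m)"
proof -
  define r where "r = real p powr (1 / real K)"
  have p: "real p \<ge> 1"
    using assms(3) one_le_power[of "4::nat" K] by linarith
  have r4: "4 \<le> r"
    using pow_le_imp_le_powr[of K 4 "real p"] assms(1,3) by (simp add: r_def)
  obtain M where M: "1 \<le> M" "real M \<le> r / 2" "r / 4 \<le> real M"
    using exists_nat_between_quarter_half[OF r4] by blast
  show ?thesis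
  proof (rule that[OF M(1)])
    have "real M ^ K \<le> (r / 2) ^ K"
      using M(2) by (intro power_mono) simp_all
    also have "\<dots> < r ^ K"
      using r4 assms(1) by (intro power_strict_mono) simp_all
    also have "\<dots> = real p"
      using assms(1) p by (simp add: r_def powr_realpow[symmetric] powr_powr)
    finally show "M ^ K < p"
      by (simp flip: of_nat_power)
    have "real N * real K * (real p / real M) \<le> real N * real K * (real p / (r / 4))"
      using M(3) r4 by (intro mult_left_mono divide_left_mono) simp_all
    also have "\<dots> = real (4 * N * K) * real p powr (1 - 1 / real K)"
      using p assms(1) by (simp add: r_def powr_diff)
    also have "\<dots> < real p powr (1 / real (2 * K)) * real p powr (1 - 1 / real K)"
    proof (intro mult_strict_right_mono pow_less_imp_less_powr)
      show "real (4 * N * K) ^ (2 * K) < real p"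
        using assms(4) by (metis of_nat_less_iff of_nat_power)
    qed (use assms(1) p in simp_all)
    also have "\<dots> \<le> real p powr (1 / real K - 1 / real m) * real p powr (1 - 1 / real K)"
      using p assms(1,2) by (intro mult_right_mono powr_mono) (simp_all add: field_simps)
    also have "\<dots> = real p powr (1 - 1 / real m)"
      by (simp add: powr_add[symmetric])
    finally show "real N * real K * (real p / real M) < real p powr (1 - 1 / real m)" .
  qed
qed

lemma powr_one_minus_inverse_bounds:
  fixes m p :: nat
  assumes "m \<ge> 2" "2 ^ m \<le> p" "m\<^sup>2 < p"
  shows "2 * real p powr (1 - 1 / real m) \<le> real p" "real m < real p powr (1 - 1 / real m)"
proof -
  have p: "real p \<ge> 1"
    using assms(3) by simp
  have "2 \<le> real p powr (1 / real m)"
    using pow_le_imp_le_powr[of m 2 "real p"] assms(1,2) by (simp flip: of_nat_power)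
  then have "2 * (real p / real p powr (1 / real m)) \<le> real p"
    using p by (simp add: field_simps)
  then show "2 * real p powr (1 - 1 / real m) \<le> real p"
    using p by (simp add: powr_diff)
  have "real m < real p powr (1 / real 2)"
    using pow_less_imp_less_powr[of 2 "real m" "real p"] assms(3) by (simp flip: of_nat_power)
  also have "\<dots> \<le> real p powr (1 - 1 / real m)"
    using p assms(1) by (intro powr_mono) (simp_all add: field_simps)
  finally show "real m < real p powr (1 - 1 / real m)" .
qed

lemma exists_fejer_and_spectrum_parameters:
  fixes \<epsilon> :: real
  assumes "\<epsilon> > 0"
  obtains N K :: nat where "N \<ge> 4" "12 / real N \<le> \<epsilon>" "K \<ge> 1" "2 / \<epsilon>\<^sup>2 < real K"
proof
  define N where "N = nat \<lceil>12 / \<epsilon>\<rceil> + 4"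
  show "N \<ge> 4" "nat \<lfloor>2 / \<epsilon>\<^sup>2\<rfloor> + 1 \<ge> 1"
    by (simp_all add: N_def)
  show "2 / \<epsilon>\<^sup>2 < real (nat \<lfloor>2 / \<epsilon>\<^sup>2\<rfloor> + 1)"
    by linarith
  have "12 / \<epsilon> \<le> real N"
    unfolding N_def by linarith
  then have "12 \<le> real N * \<epsilon>"
    using assms by (simp add: pos_divide_le_eq)
  then show "12 / real N \<le> \<epsilon>"
    using \<open>N \<ge> 4\<close> by (simp add: divide_le_eq mult.commute)
qed

lemma exists_dilation_with_small_frequencies:
  fixes \<epsilon> :: real and N K m p :: nat and f :: "nat \<Rightarrow> real"
  assumes "prime p" "p > 2" "\<forall>x<p. \<bar>f x\<bar> \<le> 1" "\<epsilon> > 0" "2 / \<epsilon>\<^sup>2 < real K"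
    and "K \<ge> 1" "2 * K \<le> m" "4 ^ K \<le> p" "(4 * N * K) ^ (2 * K) < p"
  obtains t :: nat and T :: "int set" where "coprime t p" "finite T" "card T \<le> K"
    "real_of_int (int (N - 1) * (\<Sum>s\<in>T. \<bar>s\<bar>)) < real p powr (1 - 1 / real m)"
    "\<And>a. a < p \<Longrightarrow> \<epsilon> \<le> norm (zp_fourier p (\<lambda>x. f ((t * x) mod p)) (- 2 * int a)) \<Longrightarrow>
      (\<exists>s\<in>T. [int a = s] (mod int p)) \<and> (\<exists>s\<in>T. [- 2 * int a = s] (mod int p))"
proof -
  obtain M where M: "M \<ge> 1" "M ^ K < p" "real N * real K * (real p / real M) < real p powr (1 - 1 / real m)"
    using exists_dirichlet_parameter[OF assms(6-9)] by blast
  obtain t T where t: "coprime t p"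
    and T: "finite T" "card T \<le> K" "\<And>s. s \<in> T \<Longrightarrow> \<bar>s\<bar> * int M < int p"
    and large: "\<And>a. a < p \<Longrightarrow> \<epsilon> \<le> norm (zp_fourier p (\<lambda>x. f ((t * x) mod p)) (- 2 * int a)) \<Longrightarrow>
      (\<exists>s\<in>T. [int a = s] (mod int p)) \<and> (\<exists>s\<in>T. [- 2 * int a = s] (mod int p))"
    using dilation_localizes_large_spectrum[OF assms(1-5) M(1,2)] by blast
  have "real_of_int (int (N - 1) * (\<Sum>s\<in>T. \<bar>s\<bar>)) \<le> real N * real K * (real p / real M)"
    using T(3) by (rule bohr_freq_bound[OF T(1,2) M(1)])
  then show ?thesis
    using that[OF t T(1,2) _ large] M(3) by linarith
qed

lemma exists_trigonometric_approximation:
  fixes \<epsilon> :: real and N K m p :: nat and f :: "nat \<Rightarrow> real"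
  assumes "\<epsilon> > 0" "N \<ge> 4" "12 / real N \<le> \<epsilon>" "K \<ge> 1" "2 / \<epsilon>\<^sup>2 < real K" "N ^ (2 * K) + 2 * K \<le> m"
    and "prime p" "p > 2" "4 ^ K \<le> p" "(4 * N * K) ^ (2 * K) < p" "2 ^ m \<le> p" "m\<^sup>2 < p"
    and f: "\<forall>n<p. 0 \<le> f n \<and> f n \<le> 1"
  shows "\<exists>(c :: nat \<Rightarrow> int) (\<gamma> :: nat \<Rightarrow> complex) (g :: real \<Rightarrow> real).
    inj_on (\<lambda>i. c i mod int p) {1..m} \<and>
    (\<forall>i\<in>{1..m}. real_of_int \<bar>c i\<bar> < real p powr (1 - 1 / real m)) \<and>
    (\<forall>\<alpha>. complex_of_real (g \<alpha>) =
      (1 / of_nat p) * (\<Sum>i=1..m. exp (- 2 * of_real pi * \<i> * of_int (c i) * of_real \<alpha> / of_nat p) * \<gamma> i)) \<and>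
    zp_mean p (\<lambda>n. g (real n)) = zp_mean p f \<and>
    (\<forall>\<alpha>. 0 \<le> g \<alpha> \<and> g \<alpha> \<le> 1) \<and>
    \<bar>zp_Lambda3 p (\<lambda>n. g (real n)) - zp_Lambda3 p f\<bar> \<le> 3 * \<epsilon>"
proof -
  have p: "p > 0" and N: "N \<ge> 1" and m: "m \<ge> 2" "2 * K \<le> m"
    using assms(2,4,6,8) by linarith+
  have "\<forall>x<p. \<bar>f x\<bar> \<le> 1"
    using f by auto
  then obtain t T where t: "coprime t p" and T: "finite T" "card T \<le> K"
    and freq: "real_of_int (int (N - 1) * (\<Sum>s\<in>T. \<bar>s\<bar>)) < real p powr (1 - 1 / real m)"
    and large: "\<And>a. a < p \<Longrightarrow> \<epsilon> \<le> norm (zp_fourier p (\<lambda>x. f ((t * x) mod p)) (- 2 * int a)) \<Longrightarrow>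
      (\<exists>s\<in>T. [int a = s] (mod int p)) \<and> (\<exists>s\<in>T. [- 2 * int a = s] (mod int p))"
    using exists_dilation_with_small_frequencies[OF assms(7,8) _ assms(1,5,4) m(2) assms(9,10)] by blast
  define h where "h = (\<lambda>x. f ((t * x) mod p))"
  have h: "\<forall>x<p. 0 \<le> h x \<and> h x \<le> 1"
    using f p by (simp add: h_def)
  have Q: "2 * real p powr (1 - 1 / real m) \<le> real p" "real m < real p powr (1 - 1 / real m)"
    by (rule powr_one_minus_inverse_bounds[OF m(1) assms(11,12)])+
  then have small: "int (N - 1) * (\<Sum>s\<in>T. \<bar>s\<bar>) < int p"
    using freq by linarith
  have "N ^ (2 * card T) \<le> m"
    using T(2) N assms(6) power_increasing[of "2 * card T" "2 * K" N] by linarith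
  then obtain c \<gamma> where "inj_on (\<lambda>i. c i mod int p) {1..m}"
    "\<forall>i\<in>{1..m}. real_of_int \<bar>c i\<bar> < real p powr (1 - 1 / real m)"
    "\<forall>\<alpha>. complex_of_real (bohr_smooth p N T h \<alpha>) = (1 / of_nat p) *
      (\<Sum>i=1..m. exp (- 2 * of_real pi * \<i> * of_int (c i) * of_real \<alpha> / of_nat p) * \<gamma> i)"
    using bohr_smooth_trigonometric_form[OF T(1) p _ Q(2,1) freq] by blast
  moreover have "zp_mean p (\<lambda>n. bohr_smooth p N T h (real n)) = zp_mean p f"
    using sum_bohr_smooth[OF T(1) p N small, of h] zp_mean_dilation[OF p t, of f]
    by (simp add: zp_mean_def h_def)
  moreover have "\<bar>zp_Lambda3 p (\<lambda>n. bohr_smooth p N T h (real n)) - zp_Lambda3 p f\<bar> \<le> 3 * \<epsilon>"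
    using bohr_smooth_Lambda3_close[OF T(1) p assms(2) h less_imp_le[OF assms(1)] large[folded h_def]]
      assms(3) zp_Lambda3_dilation[OF p t, of f] by (simp add: h_def)
  ultimately show ?thesis
    using bohr_smooth_bounds[OF T(1) p N small h] by blast
qed

theorem proposition1:
  fixes \<epsilon> :: real
  assumes "\<epsilon> > 0"
  shows "\<exists>m0 p0 :: nat. \<forall>p :: nat. prime p \<and> p > p0 \<longrightarrow>
    (\<forall>f :: nat \<Rightarrow> real. (\<forall>n<p. 0 \<le> f n \<and> f n \<le> 1) \<longrightarrow>
      (\<exists>(m :: nat) (c :: nat \<Rightarrow> int) (\<gamma> :: nat \<Rightarrow> complex) (g :: real \<Rightarrow> real).
         1 \<le> m \<and> m < m0 \<and>
         inj_on (\<lambda>i. c i mod int p) {1..m} \<and>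
         (\<forall>i\<in>{1..m}. real_of_int \<bar>c i\<bar> < real p powr (1 - 1 / real m)) \<and>
         (\<forall>\<alpha>::real. complex_of_real (g \<alpha>) =
            (1 / of_nat p) * (\<Sum>i=1..m. exp (- 2 * of_real pi * \<i> * of_int (c i) * of_real \<alpha> / of_nat p) * \<gamma> i)) \<and>
         zp_mean p (\<lambda>n. g (real n)) = zp_mean p f \<and>
         (\<forall>\<alpha>::real. -2 * \<epsilon> \<le> g \<alpha> \<and> g \<alpha> \<le> 1 + 2 * \<epsilon>) \<and>
         \<bar>zp_Lambda3 p (\<lambda>n. g (real n)) - zp_Lambda3 p f\<bar> < 25 * \<epsilon>))"
proof -
  obtain N K where N: "N \<ge> 4" "12 / real N \<le> \<epsilon>" and K: "K \<ge> 1" "2 / \<epsilon>\<^sup>2 < real K"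
    using exists_fejer_and_spectrum_parameters[OF assms] by blast
  define m where "m = N ^ (2 * K) + 2 * K"
  define p0 where "p0 = (4 * N * K) ^ (2 * K) + 4 ^ K + 2 ^ m + m\<^sup>2 + 2"
  have m: "N ^ (2 * K) + 2 * K \<le> m" "1 \<le> m"
    using K by (simp_all add: m_def)
  have weaken_bounds: "- 2 * \<epsilon> \<le> y \<and> y \<le> 1 + 2 * \<epsilon>" if "0 \<le> y \<and> y \<le> 1" for y :: real
    using that assms by linarith
  have weaken_Lambda3: "x < 25 * \<epsilon>" if "x \<le> 3 * \<epsilon>" for x :: real
    using that assms by linarith
  let "\<exists>m0 p0. \<forall>p. prime p \<and> p0 < p \<longrightarrow> (\<forall>f. ?bounded p f \<longrightarrow> ?approximable m0 p f)" = ?thesis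
  show ?thesis
  proof (rule exI[of _ "m + 1"], rule exI[of _ p0], intro allI impI)
    fix p f assume "prime p \<and> p0 < p" and f: "?bounded p f"
    then have "prime p" "p > 2" "4 ^ K \<le> p" "(4 * N * K) ^ (2 * K) < p" "2 ^ m \<le> p" "m\<^sup>2 < p"
      by (auto simp: p0_def)
    from exists_trigonometric_approximation[OF assms N K m(1) this f] show "?approximable (m + 1) p f"
      using m(2) less_add_one[of m] weaken_bounds weaken_Lambda3 by blast
  qed
qed

end
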